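(* Let $H$ be a finite group, $A$ a finite faithful irreducible $H$-module, $t$ a positive integer, and $G=A^t\rtimes H$ (with $H$ acting diagonally on $A^t$). Then $\alpha(G)=t+\sigma(H,A)$. In particular, $t\leqslant\alpha(G)\leqslant t+\dim_{\mathrm{End}_H(A)}A$.
   Context: $\alpha(G)$ is the minimal number of maximal subgroups of $G$ whose intersection equals the Frattini subgroup $\mathrm{Frat}(G)$. $\mathrm{Der}(H,A)$ is the set of derivations (crossed homomorphisms) $\delta:H\to A$, and for $\delta\in\mathrm{Der}(H,A)$ let $C_\delta=\{h\in H: h^\delta=0\}$. Let $\Lambda(H,A)$ be the union of the set of maximal subgroups of $H$ and $\{C_\delta:\delta\in\mathrm{Der}(H,A)\}$, and let $\sigma(H,A)$ be the minimal cardinality of a family of subgroups in $\Lambda(H,A)$ with trivial intersection. $\mathrm{End}_H(A)$ is the field of $H$-module endomorphisms of $A$. *)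

theory Defs
  imports "HOL-Algebra.Algebra"
begin

definition maximal_subgroup :: "'g set \<Rightarrow> ('g, 'b) monoid_scheme \<Rightarrow> bool" where
  "maximal_subgroup M G \<longleftrightarrow> subgroup M G \<and> M \<noteq> carrier G \<and>
     (\<forall>K. subgroup K G \<and> M \<subseteq> K \<longrightarrow> K = M \<or> K = carrier G)"

text \<open>Intersections of families of subgroups are taken inside the carrier,
  so the empty family has intersection the whole group.\<close>

definition frattini :: "('g, 'b) monoid_scheme \<Rightarrow> 'g set" where
  "frattini G = carrier G \<inter> \<Inter>{M. maximal_subgroup M G}"

definition alpha :: "('g, 'b) monoid_scheme \<Rightarrow> nat" where
  "alpha G = (LEAST n. \<exists>F. F \<subseteq> {M. maximal_subgroup M G} \<and> finite F \<and> card F = n \<and>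
                          carrier G \<inter> \<Inter>F = frattini G)"

definition right_module :: "('h, 'c) monoid_scheme \<Rightarrow> ('a, 'd) monoid_scheme \<Rightarrow> ('a \<Rightarrow> 'h \<Rightarrow> 'a) \<Rightarrow> bool" where
  "right_module H A act \<longleftrightarrow> group H \<and> comm_group A \<and>
     (\<forall>a\<in>carrier A. \<forall>h\<in>carrier H. act a h \<in> carrier A) \<and>
     (\<forall>a\<in>carrier A. \<forall>b\<in>carrier A. \<forall>h\<in>carrier H. act (a \<otimes>\<^bsub>A\<^esub> b) h = act a h \<otimes>\<^bsub>A\<^esub> act b h) \<and>
     (\<forall>a\<in>carrier A. act a \<one>\<^bsub>H\<^esub> = a) \<and>
     (\<forall>a\<in>carrier A. \<forall>h\<in>carrier H. \<forall>k\<in>carrier H. act a (h \<otimes>\<^bsub>H\<^esub> k) = act (act a h) k)"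

definition faithful_module :: "('h, 'c) monoid_scheme \<Rightarrow> ('a, 'd) monoid_scheme \<Rightarrow> ('a \<Rightarrow> 'h \<Rightarrow> 'a) \<Rightarrow> bool" where
  "faithful_module H A act \<longleftrightarrow>
     (\<forall>h\<in>carrier H. (\<forall>a\<in>carrier A. act a h = a) \<longrightarrow> h = \<one>\<^bsub>H\<^esub>)"

definition irreducible_module :: "('h, 'c) monoid_scheme \<Rightarrow> ('a, 'd) monoid_scheme \<Rightarrow> ('a \<Rightarrow> 'h \<Rightarrow> 'a) \<Rightarrow> bool" where
  "irreducible_module H A act \<longleftrightarrow> carrier A \<noteq> {\<one>\<^bsub>A\<^esub>} \<and>
     (\<forall>B. subgroup B A \<and> (\<forall>b\<in>B. \<forall>h\<in>carrier H. act b h \<in> B) \<longrightarrow>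
          B = {\<one>\<^bsub>A\<^esub>} \<or> B = carrier A)"

text \<open>Elements are pairs (h, v) with v : {..<t} \<rightarrow> A, multiplied by
  (h, v)(k, w) = (hk, v^k w), i.e. h v k w = hk (k^{-1} v k) w.\<close>

definition semidirect_power ::
  "('h, 'c) monoid_scheme \<Rightarrow> ('a, 'd) monoid_scheme \<Rightarrow> ('a \<Rightarrow> 'h \<Rightarrow> 'a) \<Rightarrow> nat \<Rightarrow> ('h \<times> (nat \<Rightarrow> 'a)) monoid" where
  "semidirect_power H A act t =
    \<lparr>carrier = carrier H \<times> ({..<t} \<rightarrow>\<^sub>E carrier A),
     monoid.mult = (\<lambda>(h, v) (k, w). (h \<otimes>\<^bsub>H\<^esub> k, \<lambda>i\<in>{..<t}. act (v i) k \<otimes>\<^bsub>A\<^esub> w i)),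
     one = (\<one>\<^bsub>H\<^esub>, \<lambda>i\<in>{..<t}. \<one>\<^bsub>A\<^esub>)\<rparr>"

definition derivations :: "('h, 'c) monoid_scheme \<Rightarrow> ('a, 'd) monoid_scheme \<Rightarrow> ('a \<Rightarrow> 'h \<Rightarrow> 'a) \<Rightarrow> ('h \<Rightarrow> 'a) set" where
  "derivations H A act = {\<delta> \<in> carrier H \<rightarrow>\<^sub>E carrier A.
      \<forall>h\<in>carrier H. \<forall>k\<in>carrier H. \<delta> (h \<otimes>\<^bsub>H\<^esub> k) = act (\<delta> h) k \<otimes>\<^bsub>A\<^esub> \<delta> k}"

definition der_kernel :: "('h, 'c) monoid_scheme \<Rightarrow> ('a, 'd) monoid_scheme \<Rightarrow> ('h \<Rightarrow> 'a) \<Rightarrow> 'h set" where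
  "der_kernel H A \<delta> = {h \<in> carrier H. \<delta> h = \<one>\<^bsub>A\<^esub>}"

definition Lambda :: "('h, 'c) monoid_scheme \<Rightarrow> ('a, 'd) monoid_scheme \<Rightarrow> ('a \<Rightarrow> 'h \<Rightarrow> 'a) \<Rightarrow> 'h set set" where
  "Lambda H A act = {M. maximal_subgroup M H} \<union> (der_kernel H A ` derivations H A act)"

definition sigma :: "('h, 'c) monoid_scheme \<Rightarrow> ('a, 'd) monoid_scheme \<Rightarrow> ('a \<Rightarrow> 'h \<Rightarrow> 'a) \<Rightarrow> nat" where
  "sigma H A act = (LEAST n. \<exists>F. F \<subseteq> Lambda H A act \<and> finite F \<and> card F = n \<and>
                              carrier H \<inter> \<Inter>F = {\<one>\<^bsub>H\<^esub>})"

definition End_H :: "('h, 'c) monoid_scheme \<Rightarrow> ('a, 'd) monoid_scheme \<Rightarrow> ('a \<Rightarrow> 'h \<Rightarrow> 'a) \<Rightarrow> ('a \<Rightarrow> 'a) set" where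
  "End_H H A act = {\<phi> \<in> carrier A \<rightarrow>\<^sub>E carrier A. \<phi> \<in> hom A A \<and>
      (\<forall>a\<in>carrier A. \<forall>h\<in>carrier H. \<phi> (act a h) = act (\<phi> a) h)}"

text \<open>Dimension of A over the field End_H(A) (acting by evaluation):
  the least size of a spanning family.\<close>

definition dim_End :: "('h, 'c) monoid_scheme \<Rightarrow> ('a, 'd) monoid_scheme \<Rightarrow> ('a \<Rightarrow> 'h \<Rightarrow> 'a) \<Rightarrow> nat" where
  "dim_End H A act = (LEAST n. \<exists>as. length as = n \<and> set as \<subseteq> carrier A \<and>
      (\<forall>a\<in>carrier A. \<exists>\<phi>s. length \<phi>s = n \<and> set \<phi>s \<subseteq> End_H H A act \<and>
          a = finprod A (\<lambda>i. (\<phi>s ! i) (as ! i)) {..<n}))"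

end

(*
  Write V = A^t, so that G = V \<rtimes> H. A maximal subgroup of G either contains V, and is then
  K \<times> V for a maximal subgroup K of H, or it supplements V; then its intersection with V is the
  kernel of an H-module epimorphism \<phi> : V \<rightarrow> A, and the subgroup is {(h, v). \<phi> v = \<delta> h} for a
  derivation \<delta> : H \<rightarrow> A.

  The t coordinate subgroups {(h, v). v_j = 1}, together with lifts of a smallest family from
  \<Lambda>(H, A) with trivial intersection, meet trivially; hence Frat(G) = 1 and
  \<alpha>(G) \<le> t + \<sigma>(H, A). Conversely, a family of maximal subgroups with trivial intersection
  contains t supplements of V, each cutting the intersection with V down by a factor |A|, so
  that they intersect in a complement {(h, \<gamma> h)} of V. Every other member meets this complement
  in a set from \<Lambda>(H, A), and these sets intersect trivially, whence \<sigma>(H, A) \<le> \<alpha>(G) - t.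
  Finally, by faithfulness the centralisers of a spanning family of A over End_H(A) intersect
  trivially, so \<sigma>(H, A) \<le> dim A.
*)

theory Submission
  imports Defs
begin

lemma (in group_hom) card_carrier_eq_card_mult_card_kernel:
  assumes "h ` carrier G = carrier H"
  shows "card (carrier G) = card (carrier H) * card (kernel G H h)"
proof -
  have "card (rcosets kernel G H h) = card (carrier H)"
    using iso_same_card[OF FactGroup_iso[OF assms]] by (simp add: FactGroup_def)
  then show ?thesis
    using G.lagrange[OF subgroup_kernel] by (simp add: order_def)
qed

lemma (in group_hom) subgroup_eq_carrier_if_image_eq:
  assumes D: "subgroup D G" and ker: "kernel G H h \<subseteq> D" and img: "h ` D = h ` carrier G"
  shows "D = carrier G"
proof
  show "D \<subseteq> carrier G"
    by (rule subgroup.subset[OF D])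
  show "carrier G \<subseteq> D"
  proof
    fix x assume x: "x \<in> carrier G"
    then obtain d where d: "d \<in> D" "h d = h x"
      using img by (metis imageE imageI)
    have dG: "d \<in> carrier G"
      using subgroup.mem_carrier[OF D d(1)] .
    then have "inv d \<otimes> x \<in> kernel G H h"
      using x d(2) by (simp add: kernel_def H.l_inv)
    then have "d \<otimes> (inv d \<otimes> x) \<in> D"
      using ker subgroup.m_closed[OF D d(1)] by blast
    then show "x \<in> D"
      using dG x by (simp add: G.m_assoc[symmetric])
  qed
qed

lemma (in group) subgroup_carrier_Int_Inter:
  assumes "\<And>M. M \<in> S \<Longrightarrow> subgroup M G"
  shows "subgroup (carrier G \<inter> \<Inter>S) G"
proof (cases "S = {}")
  case False
  then have "carrier G \<inter> \<Inter>S = \<Inter>S"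
    using assms subgroup.subset by blast
  then show ?thesis
    using subgroups_Inter[OF assms False] by simp
qed (simp add: subgroup_self)

section \<open>Modules, derivations and \<sigma>(H, A)\<close>

lemma sigma_le_card:
  "F \<subseteq> Lambda H A act \<Longrightarrow> finite F \<Longrightarrow> carrier H \<inter> \<Inter>F = {\<one>\<^bsub>H\<^esub>} \<Longrightarrow> sigma H A act \<le> card F"
  unfolding sigma_def by (rule Least_le) blast

locale H_module = H: group H + A: comm_group A
  for H :: "'h monoid" and A :: "'a monoid" and act :: "'a \<Rightarrow> 'h \<Rightarrow> 'a" +
  assumes right_module: "right_module H A act"
begin

lemma act_closed [simp]: "a \<in> carrier A \<Longrightarrow> h \<in> carrier H \<Longrightarrow> act a h \<in> carrier A"
  using right_module unfolding right_module_def by blast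

lemma act_mult:
  "a \<in> carrier A \<Longrightarrow> b \<in> carrier A \<Longrightarrow> h \<in> carrier H \<Longrightarrow> act (a \<otimes>\<^bsub>A\<^esub> b) h = act a h \<otimes>\<^bsub>A\<^esub> act b h"
  using right_module unfolding right_module_def by blast

lemma act_one_right [simp]: "a \<in> carrier A \<Longrightarrow> act a \<one>\<^bsub>H\<^esub> = a"
  using right_module unfolding right_module_def by blast

lemma act_act: "a \<in> carrier A \<Longrightarrow> h \<in> carrier H \<Longrightarrow> k \<in> carrier H \<Longrightarrow> act (act a h) k = act a (h \<otimes>\<^bsub>H\<^esub> k)"
  using right_module unfolding right_module_def by metis

lemma group_hom_act: "h \<in> carrier H \<Longrightarrow> group_hom A A (\<lambda>a. act a h)"
  by (simp add: group_hom_def group_hom_axioms_def hom_def act_mult A.is_group)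

lemma act_one [simp]: "h \<in> carrier H \<Longrightarrow> act \<one>\<^bsub>A\<^esub> h = \<one>\<^bsub>A\<^esub>"
  using group_hom.hom_one[OF group_hom_act] .

lemma act_inv [simp]: "a \<in> carrier A \<Longrightarrow> h \<in> carrier H \<Longrightarrow> act (inv\<^bsub>A\<^esub> a) h = inv\<^bsub>A\<^esub> (act a h)"
  using group_hom.hom_inv[OF group_hom_act] .

definition H_submodule :: "'a set \<Rightarrow> bool" where
  "H_submodule B \<longleftrightarrow> subgroup B A \<and> (\<forall>b\<in>B. \<forall>h\<in>carrier H. act b h \<in> B)"

lemma H_submoduleI:
  "subgroup B A \<Longrightarrow> (\<And>b h. b \<in> B \<Longrightarrow> h \<in> carrier H \<Longrightarrow> act b h \<in> B) \<Longrightarrow> H_submodule B"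
  unfolding H_submodule_def by blast

lemma H_submodule_subgroup: "H_submodule B \<Longrightarrow> subgroup B A"
  unfolding H_submodule_def by blast

lemma H_submodule_act: "H_submodule B \<Longrightarrow> b \<in> B \<Longrightarrow> h \<in> carrier H \<Longrightarrow> act b h \<in> B"
  unfolding H_submodule_def by blast

lemma der_closed: "\<delta> \<in> derivations H A act \<Longrightarrow> h \<in> carrier H \<Longrightarrow> \<delta> h \<in> carrier A"
  unfolding derivations_def by auto

lemma der_mult:
  "\<delta> \<in> derivations H A act \<Longrightarrow> h \<in> carrier H \<Longrightarrow> k \<in> carrier H \<Longrightarrow>
   \<delta> (h \<otimes>\<^bsub>H\<^esub> k) = act (\<delta> h) k \<otimes>\<^bsub>A\<^esub> \<delta> k"
  unfolding derivations_def by blast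

lemma der_one: "\<delta> \<in> derivations H A act \<Longrightarrow> \<delta> \<one>\<^bsub>H\<^esub> = \<one>\<^bsub>A\<^esub>"
  using der_mult[of \<delta> "\<one>\<^bsub>H\<^esub>" "\<one>\<^bsub>H\<^esub>"] der_closed[of \<delta> "\<one>\<^bsub>H\<^esub>"]
  by (simp add: A.l_cancel_one')

lemma der_inv:
  assumes "\<delta> \<in> derivations H A act" and "h \<in> carrier H"
  shows "\<delta> (inv\<^bsub>H\<^esub> h) = inv\<^bsub>A\<^esub> (act (\<delta> h) (inv\<^bsub>H\<^esub> h))"
proof -
  have "act (\<delta> h) (inv\<^bsub>H\<^esub> h) \<otimes>\<^bsub>A\<^esub> \<delta> (inv\<^bsub>H\<^esub> h) = \<one>\<^bsub>A\<^esub>"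
    using der_mult[OF assms(1,2), of "inv\<^bsub>H\<^esub> h"] der_one[OF assms(1)] assms(2) by simp
  then show ?thesis
    using assms by (simp add: der_closed A.inv_equality A.m_comm)
qed

lemma derivation_const_one: "(\<lambda>h\<in>carrier H. \<one>\<^bsub>A\<^esub>) \<in> derivations H A act"
  by (simp add: derivations_def)

lemma derivation_quotient:
  assumes \<delta>: "\<delta> \<in> derivations H A act" and \<epsilon>: "\<epsilon> \<in> derivations H A act"
  shows "(\<lambda>h\<in>carrier H. \<delta> h \<otimes>\<^bsub>A\<^esub> inv\<^bsub>A\<^esub> \<epsilon> h) \<in> derivations H A act"
  unfolding derivations_def
proof (intro CollectI conjI ballI)
  fix h k assume h: "h \<in> carrier H" and k: "k \<in> carrier H"
  have "\<delta> (h \<otimes>\<^bsub>H\<^esub> k) \<otimes>\<^bsub>A\<^esub> inv\<^bsub>A\<^esub> \<epsilon> (h \<otimes>\<^bsub>H\<^esub> k)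
      = act (\<delta> h \<otimes>\<^bsub>A\<^esub> inv\<^bsub>A\<^esub> \<epsilon> h) k \<otimes>\<^bsub>A\<^esub> (\<delta> k \<otimes>\<^bsub>A\<^esub> inv\<^bsub>A\<^esub> \<epsilon> k)"
    using h k der_closed[OF \<delta>] der_closed[OF \<epsilon>]
    by (simp add: der_mult[OF \<delta>] der_mult[OF \<epsilon>] act_mult A.inv_mult A.m_ac)
  then show "(\<lambda>h\<in>carrier H. \<delta> h \<otimes>\<^bsub>A\<^esub> inv\<^bsub>A\<^esub> \<epsilon> h) (h \<otimes>\<^bsub>H\<^esub> k) =
      act ((\<lambda>h\<in>carrier H. \<delta> h \<otimes>\<^bsub>A\<^esub> inv\<^bsub>A\<^esub> \<epsilon> h) h) k
      \<otimes>\<^bsub>A\<^esub> (\<lambda>h\<in>carrier H. \<delta> h \<otimes>\<^bsub>A\<^esub> inv\<^bsub>A\<^esub> \<epsilon> h) k"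
    using h k by simp
qed (use der_closed[OF \<delta>] der_closed[OF \<epsilon>] in auto)

lemma der_kernel_quotient:
  assumes "\<delta> \<in> derivations H A act" and "\<epsilon> \<in> derivations H A act"
  shows "der_kernel H A (\<lambda>h\<in>carrier H. \<delta> h \<otimes>\<^bsub>A\<^esub> inv\<^bsub>A\<^esub> \<epsilon> h) = {h \<in> carrier H. \<delta> h = \<epsilon> h}"
  using assms by (auto simp: der_kernel_def der_closed A.inv_solve_right')

definition inner_der :: "'a \<Rightarrow> 'h \<Rightarrow> 'a" where
  "inner_der a = (\<lambda>h\<in>carrier H. act a h \<otimes>\<^bsub>A\<^esub> inv\<^bsub>A\<^esub> a)"

lemma inner_der_derivation: "a \<in> carrier A \<Longrightarrow> inner_der a \<in> derivations H A act"
  by (auto simp: derivations_def inner_der_def act_mult act_act A.m_assoc A.l_inv A.m_assoc[symmetric])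

lemma der_kernel_inner_der:
  "a \<in> carrier A \<Longrightarrow> der_kernel H A (inner_der a) = {h \<in> carrier H. act a h = a}"
  by (auto simp: der_kernel_def inner_der_def A.inv_solve_right')

lemma act_finprod:
  assumes "finite I" and "f \<in> I \<rightarrow> carrier A" and h: "h \<in> carrier H"
  shows "act (finprod A f I) h = finprod A (\<lambda>i. act (f i) h) I"
  using assms(1,2)
proof (induction I rule: finite_induct)
  case (insert i I)
  then have f: "f \<in> I \<rightarrow> carrier A" "f i \<in> carrier A"
    by auto
  have act_f: "(\<lambda>i. act (f i) h) \<in> I \<rightarrow> carrier A"
    using f(1) h by (simp add: Pi_iff)
  have "act (finprod A f (insert i I)) h = act (f i \<otimes>\<^bsub>A\<^esub> finprod A f I) h"
    by (simp only: A.finprod_insert[OF insert.hyps f])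
  also have "\<dots> = act (f i) h \<otimes>\<^bsub>A\<^esub> finprod A (\<lambda>i. act (f i) h) I"
    by (simp only: act_mult[OF f(2) A.finprod_closed[OF f(1)] h] insert.IH[OF f(1)])
  also have "\<dots> = finprod A (\<lambda>i. act (f i) h) (insert i I)"
    using A.finprod_insert[OF insert.hyps act_f act_closed[OF f(2) h]] by (rule sym)
  finally show ?case .
qed (simp add: h)

definition End_spanning :: "'a list \<Rightarrow> bool" where
  "End_spanning as \<longleftrightarrow> set as \<subseteq> carrier A \<and>
     (\<forall>a\<in>carrier A. \<exists>\<phi>s. length \<phi>s = length as \<and> set \<phi>s \<subseteq> End_H H A act \<and>
        a = finprod A (\<lambda>i. (\<phi>s ! i) (as ! i)) {..<length as})"

lemma dim_End_eq_Least_End_spanning: "dim_End H A act = (LEAST n. \<exists>as. length as = n \<and> End_spanning as)"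
proof -
  have "(\<exists>as. length as = n \<and> End_spanning as) \<longleftrightarrow> (\<exists>as. length as = n \<and> set as \<subseteq> carrier A \<and>
      (\<forall>a\<in>carrier A. \<exists>\<phi>s. length \<phi>s = n \<and> set \<phi>s \<subseteq> End_H H A act \<and>
        a = finprod A (\<lambda>i. (\<phi>s ! i) (as ! i)) {..<n}))" for n
    by (auto simp: End_spanning_def)
  then show ?thesis
    by (simp add: dim_End_def)
qed

lemma End_spanning_carrier:
  assumes "set as = carrier A"
  shows "End_spanning as"
  unfolding End_spanning_def
proof (intro conjI ballI)
  show "set as \<subseteq> carrier A"
    using assms by simp
  fix a assume "a \<in> carrier A"
  then obtain k where k: "k < length as" "as ! k = a"
    using assms by (metis in_set_conv_nth)
  have as_closed: "as ! i \<in> carrier A" if "i < length as" for i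
    using assms that nth_mem by blast
  define \<phi>s where "\<phi>s = map (\<lambda>i. if i = k then (\<lambda>x\<in>carrier A. x) else (\<lambda>x\<in>carrier A. \<one>\<^bsub>A\<^esub>)) [0..<length as]"
  have "set \<phi>s \<subseteq> End_H H A act"
    by (auto simp: \<phi>s_def End_H_def hom_def)
  moreover have "finprod A (\<lambda>i. (\<phi>s ! i) (as ! i)) {..<length as}
      = finprod A (\<lambda>i. if k = i then as ! i else \<one>\<^bsub>A\<^esub>) {..<length as}"
    by (intro A.finprod_cong') (auto simp: \<phi>s_def as_closed)
  moreover have "\<dots> = a"
    using k as_closed by (subst A.finprod_singleton) auto
  ultimately show "\<exists>\<phi>s. length \<phi>s = length as \<and> set \<phi>s \<subseteq> End_H H A act \<and>
      a = finprod A (\<lambda>i. (\<phi>s ! i) (as ! i)) {..<length as}"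
    by (intro exI[of _ \<phi>s]) (simp add: \<phi>s_def)
qed

lemma dim_End_attained:
  assumes "finite (carrier A)"
  obtains as where "length as = dim_End H A act" and "End_spanning as"
proof -
  obtain as where "set as = carrier A"
    using finite_list[OF assms] by blast
  then have "\<exists>n as. length as = n \<and> End_spanning as"
    using End_spanning_carrier by blast
  then show thesis
    using LeastI_ex[of "\<lambda>n. \<exists>as. length as = n \<and> End_spanning as"] that
    unfolding dim_End_eq_Least_End_spanning by blast
qed

lemma act_eq_if_fixes_End_spanning:
  assumes sp: "End_spanning as" and h: "h \<in> carrier H" and fix_as: "\<And>b. b \<in> set as \<Longrightarrow> act b h = b"
    and a: "a \<in> carrier A"
  shows "act a h = a"
proof -
  obtain \<phi>s where len: "length \<phi>s = length as" and End: "set \<phi>s \<subseteq> End_H H A act"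
    and a_eq: "a = finprod A (\<lambda>i. (\<phi>s ! i) (as ! i)) {..<length as}"
    using sp a unfolding End_spanning_def by blast
  have \<phi>s: "\<phi>s ! i \<in> End_H H A act" and as: "as ! i \<in> set as" "as ! i \<in> carrier A"
    if "i < length as" for i
    using that len End sp by (auto simp: End_spanning_def)
  have closed: "(\<phi>s ! i) (as ! i) \<in> carrier A" if "i < length as" for i
    using \<phi>s[OF that] as[OF that] by (auto simp: End_H_def)
  have "act ((\<phi>s ! i) (as ! i)) h = (\<phi>s ! i) (as ! i)" if "i < length as" for i
  proof -
    have "act ((\<phi>s ! i) (as ! i)) h = (\<phi>s ! i) (act (as ! i) h)"
      using \<phi>s[OF that] as[OF that] h by (simp add: End_H_def)
    then show ?thesis
      using fix_as[OF as(1)[OF that]] by simp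
  qed
  then have "finprod A (\<lambda>i. act ((\<phi>s ! i) (as ! i)) h) {..<length as}
      = finprod A (\<lambda>i. (\<phi>s ! i) (as ! i)) {..<length as}"
    using closed by (intro A.finprod_cong') (auto simp: Pi_iff)
  then show ?thesis
    using closed h by (simp add: a_eq act_finprod Pi_iff)
qed

lemma Inter_inner_der_kernels:
  assumes faithful: "faithful_module H A act" and sp: "End_spanning as"
  shows "carrier H \<inter> \<Inter>((\<lambda>a. der_kernel H A (inner_der a)) ` set as) = {\<one>\<^bsub>H\<^esub>}"
proof -
  have as_A: "set as \<subseteq> carrier A"
    using sp by (simp add: End_spanning_def)
  have "h = \<one>\<^bsub>H\<^esub>" if h: "h \<in> carrier H" and fixed: "\<forall>b\<in>set as. h \<in> der_kernel H A (inner_der b)" for h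
  proof -
    have "act b h = b" if "b \<in> set as" for b
      using fixed that as_A der_kernel_inner_der by blast
    then show ?thesis
      using faithful h act_eq_if_fixes_End_spanning[OF sp h] by (auto simp: faithful_module_def)
  qed
  moreover have "\<one>\<^bsub>H\<^esub> \<in> der_kernel H A (inner_der b)" if "b \<in> set as" for b
    using that as_A der_kernel_inner_der by auto
  ultimately show ?thesis
    by auto
qed

lemma inner_der_kernel_Lambda: "a \<in> carrier A \<Longrightarrow> der_kernel H A (inner_der a) \<in> Lambda H A act"
  using inner_der_derivation by (simp add: Lambda_def)

lemma sigma_le_dim_End:
  assumes "finite (carrier A)" and "faithful_module H A act"
  shows "sigma H A act \<le> dim_End H A act"
proof -
  obtain as where len: "length as = dim_End H A act" and sp: "End_spanning as"
    using dim_End_attained[OF assms(1)] .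
  let ?F = "(\<lambda>a. der_kernel H A (inner_der a)) ` set as"
  have "?F \<subseteq> Lambda H A act"
    using sp inner_der_kernel_Lambda by (auto simp: End_spanning_def)
  then have "sigma H A act \<le> card ?F"
    using Inter_inner_der_kernels[OF assms(2) sp] by (intro sigma_le_card) simp_all
  also have "\<dots> \<le> length as"
    using card_image_le card_length le_trans by blast
  finally show ?thesis
    using len by simp
qed

lemma sigma_attained:
  assumes "finite (carrier A)" and "faithful_module H A act"
  obtains F where "F \<subseteq> Lambda H A act" "finite F" "card F = sigma H A act" "carrier H \<inter> \<Inter>F = {\<one>\<^bsub>H\<^esub>}"
proof -
  obtain as where "End_spanning as"
    using dim_End_attained[OF assms(1)] by blast
  then have "\<exists>n F. F \<subseteq> Lambda H A act \<and> finite F \<and> card F = n \<and> carrier H \<inter> \<Inter>F = {\<one>\<^bsub>H\<^esub>}"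
    using Inter_inner_der_kernels[OF assms(2)] inner_der_kernel_Lambda
    by (intro exI[of _ "card ((\<lambda>a. der_kernel H A (inner_der a)) ` set as)"]
        exI[of _ "(\<lambda>a. der_kernel H A (inner_der a)) ` set as"]) (auto simp: End_spanning_def)
  then show thesis
    using LeastI_ex[of "\<lambda>n. \<exists>F. F \<subseteq> Lambda H A act \<and> finite F \<and> card F = n \<and>
      carrier H \<inter> \<Inter>F = {\<one>\<^bsub>H\<^esub>}"] that unfolding sigma_def by blast
qed

end

section \<open>Subgroups of the semidirect product\<close>

locale module_power = H_module H A act
  for H :: "'h monoid" and A :: "'a monoid" and act :: "'a \<Rightarrow> 'h \<Rightarrow> 'a" + fixes t :: nat
begin

abbreviation G where "G \<equiv> semidirect_power H A act t"
abbreviation V where "V \<equiv> product_group {..<t} (\<lambda>_. A)"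

definition diag_act :: "(nat \<Rightarrow> 'a) \<Rightarrow> 'h \<Rightarrow> (nat \<Rightarrow> 'a)" where
  "diag_act v h = (\<lambda>i\<in>{..<t}. act (v i) h)"

lemma V_mem: "v \<in> carrier V \<Longrightarrow> i < t \<Longrightarrow> v i \<in> carrier A"
  by auto

lemma V_eqI: "v \<in> carrier V \<Longrightarrow> w \<in> carrier V \<Longrightarrow> (\<And>i. i < t \<Longrightarrow> v i = w i) \<Longrightarrow> v = w"
  by (auto intro: PiE_ext)

lemma card_carrier_V: "card (carrier V) = card (carrier A) ^ t"
  by (simp add: carrier_product_group card_PiE)

lemma comm_group_V: "comm_group V"
proof (rule group.group_comm_groupI)
  show "group V"
    by (simp add: A.is_group)
  fix v w assume "v \<in> carrier V" "w \<in> carrier V"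
  then show "v \<otimes>\<^bsub>V\<^esub> w = w \<otimes>\<^bsub>V\<^esub> v"
    by (simp add: A.m_comm PiE_iff cong: restrict_cong)
qed

lemma right_module_V: "right_module H V diag_act"
proof -
  have "diag_act v h \<in> carrier V" if "v \<in> carrier V" "h \<in> carrier H" for v h
    using that by (simp add: diag_act_def PiE_iff)
  moreover have "diag_act (v \<otimes>\<^bsub>V\<^esub> w) h = diag_act v h \<otimes>\<^bsub>V\<^esub> diag_act w h"
    if "v \<in> carrier V" "w \<in> carrier V" "h \<in> carrier H" for v w h
    using that by (simp add: diag_act_def act_mult PiE_iff cong: restrict_cong)
  moreover have "diag_act v \<one>\<^bsub>H\<^esub> = v" if "v \<in> carrier V" for v
    using that by (intro V_eqI) (simp_all add: diag_act_def PiE_iff)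
  moreover have "diag_act v (h \<otimes>\<^bsub>H\<^esub> k) = diag_act (diag_act v h) k"
    if "v \<in> carrier V" "h \<in> carrier H" "k \<in> carrier H" for v h k
    using that by (simp add: diag_act_def act_act PiE_iff cong: restrict_cong)
  ultimately show ?thesis
    by (simp add: right_module_def comm_group_V H.is_group)
qed

sublocale V: H_module H V diag_act
  by (simp add: H_module_def H_module_axioms_def H.is_group comm_group_V right_module_V)

declare carrier_product_group [simp del] one_product_group [simp del]
  mult_product_group [simp del] inv_product_group [simp del]

lemma carrier_G: "carrier G = carrier H \<times> carrier V"
  by (simp add: semidirect_power_def carrier_product_group)

lemma mem_G [simp]: "(h, v) \<in> carrier G \<longleftrightarrow> h \<in> carrier H \<and> v \<in> carrier V"
  by (simp add: carrier_G)

lemma mult_G [simp]: "(h, v) \<otimes>\<^bsub>G\<^esub> (k, w) = (h \<otimes>\<^bsub>H\<^esub> k, diag_act v k \<otimes>\<^bsub>V\<^esub> w)"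
  unfolding semidirect_power_def mult_product_group diag_act_def
  by (simp cong: restrict_cong)

lemma one_G: "\<one>\<^bsub>G\<^esub> = (\<one>\<^bsub>H\<^esub>, \<one>\<^bsub>V\<^esub>)"
  by (simp add: semidirect_power_def one_product_group)

lemma group_G: "group G"
proof (rule groupI)
  fix x y z assume "x \<in> carrier G" "y \<in> carrier G" "z \<in> carrier G"
  then show "x \<otimes>\<^bsub>G\<^esub> y \<otimes>\<^bsub>G\<^esub> z = x \<otimes>\<^bsub>G\<^esub> (y \<otimes>\<^bsub>G\<^esub> z)"
    by (cases x; cases y; cases z) (simp add: H.m_assoc V.act_mult V.act_act V.A.m_assoc)
next
  fix x assume "x \<in> carrier G"
  then obtain h v where x: "x = (h, v)" "h \<in> carrier H" "v \<in> carrier V" by (cases x) auto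
  then have "(inv\<^bsub>H\<^esub> h, inv\<^bsub>V\<^esub> (diag_act v (inv\<^bsub>H\<^esub> h))) \<otimes>\<^bsub>G\<^esub> x = \<one>\<^bsub>G\<^esub>"
    by (simp add: one_G V.act_act)
  then show "\<exists>y\<in>carrier G. y \<otimes>\<^bsub>G\<^esub> x = \<one>\<^bsub>G\<^esub>"
    using x by (intro bexI[of _ "(inv\<^bsub>H\<^esub> h, inv\<^bsub>V\<^esub> (diag_act v (inv\<^bsub>H\<^esub> h)))"]) simp_all
qed (auto simp: carrier_G one_G)

sublocale G: group G
  by (rule group_G)

lemma inv_G:
  "h \<in> carrier H \<Longrightarrow> v \<in> carrier V \<Longrightarrow>
   inv\<^bsub>G\<^esub> (h, v) = (inv\<^bsub>H\<^esub> h, inv\<^bsub>V\<^esub> (diag_act v (inv\<^bsub>H\<^esub> h)))"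
  by (rule G.inv_equality) (simp_all add: one_G V.act_act)

lemma group_hom_fst: "group_hom G H fst"
  unfolding group_hom_def group_hom_axioms_def hom_def
  by (auto simp: carrier_G H.is_group G.is_group)

lemma fst_subgroup: "subgroup L G \<Longrightarrow> subgroup (fst ` L) H"
  by (rule group_hom.subgroup_img_is_subgroup[OF group_hom_fst])

lemma subgroup_Times_carrier_V:
  assumes K: "subgroup K H"
  shows "subgroup (K \<times> carrier V) G"
proof (rule G.subgroupI)
  have "K \<subseteq> carrier H"
    using subgroup.subset[OF K] .
  then show "K \<times> carrier V \<subseteq> carrier G"
    by (auto simp: carrier_G)
  show "K \<times> carrier V \<noteq> {}"
    using subgroup.one_closed[OF K] by blast
next
  fix x assume "x \<in> K \<times> carrier V"
  then show "inv\<^bsub>G\<^esub> x \<in> K \<times> carrier V"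
    using subgroup.mem_carrier[OF K] subgroup.m_inv_closed[OF K] by (auto simp: inv_G)
next
  fix x y assume "x \<in> K \<times> carrier V" "y \<in> K \<times> carrier V"
  then show "x \<otimes>\<^bsub>G\<^esub> y \<in> K \<times> carrier V"
    using subgroup.mem_carrier[OF K] subgroup.m_closed[OF K] by auto
qed

definition fibre :: "('h \<times> (nat \<Rightarrow> 'a)) set \<Rightarrow> (nat \<Rightarrow> 'a) set" where
  "fibre L = {v. (\<one>\<^bsub>H\<^esub>, v) \<in> L}"

lemma fibre_subset: "subgroup L G \<Longrightarrow> fibre L \<subseteq> carrier V"
  unfolding fibre_def using subgroup.mem_carrier by force

lemma fibre_mult:
  assumes "subgroup L G" and "(h, v) \<in> L" and "n \<in> fibre L"
  shows "(h, v \<otimes>\<^bsub>V\<^esub> n) \<in> L"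
proof -
  have "v \<in> carrier V"
    using subgroup.mem_carrier[OF assms(1,2)] by simp
  then show ?thesis
    using subgroup.m_closed[OF assms(1,2), of "(\<one>\<^bsub>H\<^esub>, n)"] assms(3) subgroup.mem_carrier[OF assms(1,2)]
    by (simp add: fibre_def)
qed

lemma fibre_subgroup:
  assumes L: "subgroup L G"
  shows "subgroup (fibre L) V"
proof (rule V.A.subgroupI)
  show "fibre L \<subseteq> carrier V"
    by (rule fibre_subset[OF L])
  show "fibre L \<noteq> {}"
    using subgroup.one_closed[OF L] by (auto simp: fibre_def one_G)
next
  fix v assume "v \<in> fibre L"
  then have "inv\<^bsub>G\<^esub> (\<one>\<^bsub>H\<^esub>, v) \<in> L" "v \<in> carrier V"
    using subgroup.m_inv_closed[OF L] fibre_subset[OF L] by (auto simp: fibre_def)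
  then show "inv\<^bsub>V\<^esub> v \<in> fibre L"
    by (simp add: fibre_def inv_G)
next
  fix v w assume "v \<in> fibre L" "w \<in> fibre L"
  then show "v \<otimes>\<^bsub>V\<^esub> w \<in> fibre L"
    using fibre_mult[OF L] by (simp add: fibre_def)
qed

lemma fibre_quotient:
  assumes L: "subgroup L G" and "(h, v) \<in> L" and "(h, w) \<in> L"
  shows "inv\<^bsub>V\<^esub> v \<otimes>\<^bsub>V\<^esub> w \<in> fibre L"
proof -
  have hvw: "h \<in> carrier H" "v \<in> carrier V" "w \<in> carrier V"
    using subgroup.mem_carrier[OF L assms(2)] subgroup.mem_carrier[OF L assms(3)] by auto
  have "inv\<^bsub>G\<^esub> (h, v) \<otimes>\<^bsub>G\<^esub> (h, w) \<in> L"
    using assms by (simp add: subgroup.m_closed subgroup.m_inv_closed del: mult_G)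
  then show ?thesis
    using hvw by (simp add: fibre_def inv_G V.act_act)
qed

lemma fibre_act:
  assumes L: "subgroup L G" and hu: "(h, u) \<in> L" and v: "v \<in> fibre L"
  shows "diag_act v h \<in> fibre L"
proof -
  have huv: "h \<in> carrier H" "u \<in> carrier V" "v \<in> carrier V"
    using subgroup.mem_carrier[OF L hu] fibre_subset[OF L] v by auto
  have "(\<one>\<^bsub>H\<^esub>, v) \<otimes>\<^bsub>G\<^esub> (h, u) = (h, u) \<otimes>\<^bsub>G\<^esub> (\<one>\<^bsub>H\<^esub>, diag_act v h)"
    using huv by (simp add: V.A.m_comm)
  then have "(\<one>\<^bsub>H\<^esub>, diag_act v h) = inv\<^bsub>G\<^esub> (h, u) \<otimes>\<^bsub>G\<^esub> ((\<one>\<^bsub>H\<^esub>, v) \<otimes>\<^bsub>G\<^esub> (h, u))"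
    using huv by (subst G.inv_solve_left) (simp_all del: mult_G)
  moreover have "inv\<^bsub>G\<^esub> (h, u) \<otimes>\<^bsub>G\<^esub> ((\<one>\<^bsub>H\<^esub>, v) \<otimes>\<^bsub>G\<^esub> (h, u)) \<in> L"
    using L hu v by (simp add: fibre_def subgroup.m_closed subgroup.m_inv_closed del: mult_G)
  ultimately show ?thesis
    by (simp add: fibre_def)
qed

lemma H_submodule_fibre:
  assumes L: "subgroup L G" and "fst ` L = carrier H"
  shows "V.H_submodule (fibre L)"
proof (rule V.H_submoduleI[OF fibre_subgroup[OF L]])
  fix v h assume "v \<in> fibre L" "h \<in> carrier H"
  moreover obtain u where "(h, u) \<in> L"
    using \<open>h \<in> carrier H\<close> assms(2) by force
  ultimately show "diag_act v h \<in> fibre L"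
    using fibre_act[OF L] by blast
qed

lemma fibre_Times_carrier_V: "\<one>\<^bsub>H\<^esub> \<in> K \<Longrightarrow> fibre (K \<times> carrier V) = carrier V"
  by (auto simp: fibre_def)

lemma subgroup_eq_Times_carrier_V:
  assumes L: "subgroup L G" and fib: "fibre L = carrier V"
  shows "L = fst ` L \<times> carrier V"
proof
  show "L \<subseteq> fst ` L \<times> carrier V"
    using subgroup.mem_carrier[OF L] by (force simp: carrier_G)
  show "fst ` L \<times> carrier V \<subseteq> L"
  proof
    fix x assume "x \<in> fst ` L \<times> carrier V"
    then obtain h u w where x: "x = (h, w)" and hu: "(h, u) \<in> L" and w: "w \<in> carrier V"
      by force
    have u: "u \<in> carrier V"
      using subgroup.mem_carrier[OF L hu] by simp
    then have "(h, u \<otimes>\<^bsub>V\<^esub> (inv\<^bsub>V\<^esub> u \<otimes>\<^bsub>V\<^esub> w)) \<in> L"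
      using fibre_mult[OF L hu] fib w by simp
    then show "x \<in> L"
      using u w by (simp add: x V.A.m_assoc[symmetric])
  qed
qed

lemma Times_carrier_V_eq_iff: "K \<times> carrier V = K' \<times> carrier V \<longleftrightarrow> K = K'"
  using V.A.one_closed by (blast intro: Times_eq_cancel2)

lemma maximal_Times_carrier_V:
  assumes K: "maximal_subgroup K H"
  shows "maximal_subgroup (K \<times> carrier V) G"
  unfolding maximal_subgroup_def
proof (intro conjI allI impI)
  have sK: "subgroup K H" and K_ne: "K \<noteq> carrier H"
    using K by (auto simp: maximal_subgroup_def)
  show "subgroup (K \<times> carrier V) G"
    by (rule subgroup_Times_carrier_V[OF sK])
  show "K \<times> carrier V \<noteq> carrier G"
    using K_ne by (simp add: carrier_G Times_carrier_V_eq_iff)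
  fix L assume "subgroup L G \<and> K \<times> carrier V \<subseteq> L"
  then have L: "subgroup L G" and KL: "K \<times> carrier V \<subseteq> L" by auto
  have "fibre L = carrier V"
    using fibre_subset[OF L] KL subgroup.one_closed[OF sK] by (auto simp: fibre_def)
  then have L_eq: "L = fst ` L \<times> carrier V"
    by (rule subgroup_eq_Times_carrier_V[OF L])
  have "K \<subseteq> fst ` L"
    using KL V.A.one_closed by force
  then have "fst ` L = K \<or> fst ` L = carrier H"
    using K fst_subgroup[OF L] by (auto simp: maximal_subgroup_def)
  then show "L = K \<times> carrier V \<or> L = carrier G"
    using L_eq by (auto simp: carrier_G)
qed

lemma maximal_fst_image:
  assumes M: "maximal_subgroup M G" and fib: "fibre M = carrier V"
  shows "maximal_subgroup (fst ` M) H"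
  unfolding maximal_subgroup_def
proof (intro conjI allI impI)
  have sM: "subgroup M G" and M_ne: "M \<noteq> carrier G"
    and M_max: "\<And>L. subgroup L G \<Longrightarrow> M \<subseteq> L \<Longrightarrow> L = M \<or> L = carrier G"
    using M by (auto simp: maximal_subgroup_def)
  have M_eq: "M = fst ` M \<times> carrier V"
    by (rule subgroup_eq_Times_carrier_V[OF sM fib])
  show "subgroup (fst ` M) H"
    by (rule fst_subgroup[OF sM])
  show "fst ` M \<noteq> carrier H"
    using M_ne M_eq by (auto simp: carrier_G)
  fix K assume "subgroup K H \<and> fst ` M \<subseteq> K"
  then have "K \<times> carrier V = M \<or> K \<times> carrier V = carrier G"
    using M_max[OF subgroup_Times_carrier_V] M_eq by (metis Sigma_mono order_refl)
  then show "K = fst ` M \<or> K = carrier H"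
    using M_eq by (metis Times_carrier_V_eq_iff carrier_G)
qed

lemma maximal_fst_image_eq_carrier:
  assumes M: "maximal_subgroup M G" and fib: "fibre M \<noteq> carrier V"
  shows "fst ` M = carrier H"
proof -
  have sM: "subgroup M G"
    and M_max: "\<And>L. subgroup L G \<Longrightarrow> M \<subseteq> L \<Longrightarrow> L = M \<or> L = carrier G"
    using M by (auto simp: maximal_subgroup_def)
  have one: "\<one>\<^bsub>H\<^esub> \<in> fst ` M"
    using subgroup.one_closed[OF sM] by (force simp: one_G)
  have "M \<subseteq> fst ` M \<times> carrier V"
    using subgroup.mem_carrier[OF sM] by (force simp: carrier_G)
  moreover have "fst ` M \<times> carrier V \<noteq> M"
    using fib fibre_Times_carrier_V[OF one] by metis
  ultimately have "fst ` M \<times> carrier V = carrier G"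
    using M_max[OF subgroup_Times_carrier_V[OF fst_subgroup[OF sM]]] by blast
  then show ?thesis
    by (simp add: carrier_G Times_carrier_V_eq_iff)
qed

definition module_hom :: "((nat \<Rightarrow> 'a) \<Rightarrow> 'a) \<Rightarrow> bool" where
  "module_hom \<phi> \<longleftrightarrow> group_hom V A \<phi> \<and>
     (\<forall>v\<in>carrier V. \<forall>h\<in>carrier H. \<phi> (diag_act v h) = act (\<phi> v) h)"

lemma module_hom_group_hom: "module_hom \<phi> \<Longrightarrow> group_hom V A \<phi>"
  by (simp add: module_hom_def)

lemma module_hom_act:
  "module_hom \<phi> \<Longrightarrow> v \<in> carrier V \<Longrightarrow> h \<in> carrier H \<Longrightarrow> \<phi> (diag_act v h) = act (\<phi> v) h"
  by (simp add: module_hom_def)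

lemma module_hom_coordinate:
  assumes "j < t"
  shows "module_hom (\<lambda>v. v j) \<and> (\<lambda>v. v j) ` carrier V = carrier A"
proof -
  have "a \<in> (\<lambda>v. v j) ` carrier V" if "a \<in> carrier A" for a
    using assms that by (intro image_eqI[of _ _ "\<lambda>i\<in>{..<t}. a"]) (simp_all add: carrier_product_group)
  then show ?thesis
    using assms
    by (auto simp: module_hom_def group_hom_def group_hom_axioms_def hom_def diag_act_def
        mult_product_group carrier_product_group A.is_group)
qed

lemma H_submodule_image:
  assumes \<phi>: "module_hom \<phi>" and D: "V.H_submodule D"
  shows "H_submodule (\<phi> ` D)"
proof (rule H_submoduleI)
  show "subgroup (\<phi> ` D) A"
    using group_hom.subgroup_img_is_subgroup[OF module_hom_group_hom[OF \<phi>] V.H_submodule_subgroup[OF D]] .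
  fix b h assume "b \<in> \<phi> ` D" and h: "h \<in> carrier H"
  then obtain d where "d \<in> D" "b = \<phi> d" by blast
  moreover have "d \<in> carrier V"
    using subgroup.mem_carrier[OF V.H_submodule_subgroup[OF D] \<open>d \<in> D\<close>] .
  ultimately show "act b h \<in> \<phi> ` D"
    using V.H_submodule_act[OF D \<open>d \<in> D\<close> h] h module_hom_act[OF \<phi>] by (metis image_eqI)
qed

definition der_subgroup :: "((nat \<Rightarrow> 'a) \<Rightarrow> 'a) \<Rightarrow> ('h \<Rightarrow> 'a) \<Rightarrow> ('h \<times> (nat \<Rightarrow> 'a)) set" where
  "der_subgroup \<phi> \<delta> = {(h, v). (h, v) \<in> carrier G \<and> \<phi> v = \<delta> h}"

lemma mem_der_subgroup [simp]:
  "(h, v) \<in> der_subgroup \<phi> \<delta> \<longleftrightarrow> h \<in> carrier H \<and> v \<in> carrier V \<and> \<phi> v = \<delta> h"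
  by (simp add: der_subgroup_def)

lemma subgroup_der_subgroup:
  assumes \<phi>: "module_hom \<phi>" and \<delta>: "\<delta> \<in> derivations H A act"
  shows "subgroup (der_subgroup \<phi> \<delta>) G"
proof (rule G.subgroupI)
  show "der_subgroup \<phi> \<delta> \<subseteq> carrier G"
    by (auto simp: der_subgroup_def)
  have "(\<one>\<^bsub>H\<^esub>, \<one>\<^bsub>V\<^esub>) \<in> der_subgroup \<phi> \<delta>"
    using der_one[OF \<delta>] group_hom.hom_one[OF module_hom_group_hom[OF \<phi>]] by simp
  then show "der_subgroup \<phi> \<delta> \<noteq> {}"
    by blast
next
  fix x assume "x \<in> der_subgroup \<phi> \<delta>"
  then obtain h v where x: "x = (h, v)" "h \<in> carrier H" "v \<in> carrier V" "\<phi> v = \<delta> h"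
    by (cases x) auto
  then show "inv\<^bsub>G\<^esub> x \<in> der_subgroup \<phi> \<delta>"
    by (simp add: inv_G module_hom_act[OF \<phi>] der_inv[OF \<delta>]
        group_hom.hom_inv[OF module_hom_group_hom[OF \<phi>]])
next
  fix x y assume "x \<in> der_subgroup \<phi> \<delta>" "y \<in> der_subgroup \<phi> \<delta>"
  then obtain h v k w where "x = (h, v)" "h \<in> carrier H" "v \<in> carrier V" "\<phi> v = \<delta> h"
    and "y = (k, w)" "k \<in> carrier H" "w \<in> carrier V" "\<phi> w = \<delta> k"
    by (cases x; cases y) auto
  then show "x \<otimes>\<^bsub>G\<^esub> y \<in> der_subgroup \<phi> \<delta>"
    by (simp add: module_hom_act[OF \<phi>] der_mult[OF \<delta>]
        group_hom.hom_mult[OF module_hom_group_hom[OF \<phi>]])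
qed

lemma fibre_der_subgroup:
  "\<delta> \<in> derivations H A act \<Longrightarrow> fibre (der_subgroup \<phi> \<delta>) = kernel V A \<phi>"
  by (auto simp: fibre_def kernel_def der_one)

lemma module_hom_eq_if_fibre_kernel:
  assumes \<phi>: "module_hom \<phi>" and M: "subgroup M G" and ker: "kernel V A \<phi> = fibre M"
    and hv: "(h, v) \<in> M" and hw: "(h, w) \<in> M"
  shows "\<phi> v = \<phi> w"
proof -
  interpret \<phi>: group_hom V A \<phi>
    by (rule module_hom_group_hom[OF \<phi>])
  have v: "v \<in> carrier V" and w: "w \<in> carrier V"
    using subgroup.mem_carrier[OF M hv] subgroup.mem_carrier[OF M hw] by auto
  have "inv\<^bsub>V\<^esub> v \<otimes>\<^bsub>V\<^esub> w \<in> kernel V A \<phi>"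
    using fibre_quotient[OF M hv hw] ker by simp
  then have "inv\<^bsub>A\<^esub> \<phi> v \<otimes>\<^bsub>A\<^esub> \<phi> w = \<one>\<^bsub>A\<^esub>"
    using v w by (simp add: kernel_def)
  then have "\<phi> w = \<phi> v \<otimes>\<^bsub>A\<^esub> \<one>\<^bsub>A\<^esub>"
    using \<phi>.hom_closed[OF v] \<phi>.hom_closed[OF w] A.inv_solve_left'[of "\<one>\<^bsub>A\<^esub>" "\<phi> v" "\<phi> w"] by blast
  then show ?thesis
    using v by (simp only: A.r_one \<phi>.hom_closed)
qed

lemma exists_derivation_of_supplement:
  assumes sM: "subgroup M G" and onto: "fst ` M = carrier H"
    and \<phi>: "module_hom \<phi>" and ker: "kernel V A \<phi> = fibre M"
  obtains \<delta> where "\<delta> \<in> derivations H A act" and "M \<subseteq> der_subgroup \<phi> \<delta>"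
proof -
  have M_mem: "h \<in> carrier H \<and> v \<in> carrier V" if "(h, v) \<in> M" for h v
    using subgroup.mem_carrier[OF sM that] by simp
  have \<phi>_fibre: "\<phi> v = \<phi> w" if "(h, v) \<in> M" "(h, w) \<in> M" for h v w
    using module_hom_eq_if_fibre_kernel[OF \<phi> sM ker that] .
  define u where "u h = (SOME v. (h, v) \<in> M)" for h
  have u: "(h, u h) \<in> M" if "h \<in> carrier H" for h
  proof -
    have "h \<in> fst ` M"
      using onto that by simp
    then obtain v where "(h, v) \<in> M"
      by auto
    then show ?thesis
      unfolding u_def by (rule someI[where P = "\<lambda>v. (h, v) \<in> M"])
  qed
  have uV: "u h \<in> carrier V" if "h \<in> carrier H" for h
    using M_mem[OF u[OF that]] by simp
  define \<delta> where "\<delta> = (\<lambda>h\<in>carrier H. \<phi> (u h))"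
  have \<delta>: "\<delta> \<in> derivations H A act"
    unfolding derivations_def
  proof (intro CollectI conjI ballI)
    show "\<delta> \<in> carrier H \<rightarrow>\<^sub>E carrier A"
      using uV group_hom.hom_closed[OF module_hom_group_hom[OF \<phi>]] by (simp add: \<delta>_def PiE_iff)
    fix h k assume h: "h \<in> carrier H" and k: "k \<in> carrier H"
    have "(h, u h) \<otimes>\<^bsub>G\<^esub> (k, u k) \<in> M"
      using subgroup.m_closed[OF sM u[OF h] u[OF k]] .
    then have "\<phi> (u (h \<otimes>\<^bsub>H\<^esub> k)) = \<phi> (diag_act (u h) k \<otimes>\<^bsub>V\<^esub> u k)"
      using u h k by (intro \<phi>_fibre) simp_all
    then show "\<delta> (h \<otimes>\<^bsub>H\<^esub> k) = act (\<delta> h) k \<otimes>\<^bsub>A\<^esub> \<delta> k"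
      using h k uV by (simp add: \<delta>_def module_hom_act[OF \<phi>] group_hom.hom_mult[OF module_hom_group_hom[OF \<phi>]])
  qed
  have "M \<subseteq> der_subgroup \<phi> \<delta>"
  proof
    fix x assume "x \<in> M"
    then obtain h v where x: "x = (h, v)" "(h, v) \<in> M"
      by (cases x) blast
    then show "x \<in> der_subgroup \<phi> \<delta>"
      using M_mem[OF x(2)] \<phi>_fibre[OF x(2) u] by (simp add: \<delta>_def)
  qed
  with \<delta> show thesis
    by (rule that)
qed

lemma fst_image_Int_der_subgroup:
  assumes C: "subgroup C G" and C_onto: "fst ` C = carrier H"
    and \<phi>: "module_hom \<phi>" and D_onto: "\<phi> ` fibre C = carrier A" and \<delta>: "\<delta> \<in> derivations H A act"
  shows "fst ` (C \<inter> der_subgroup \<phi> \<delta>) = carrier H"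
proof
  interpret \<phi>: group_hom V A \<phi>
    by (rule module_hom_group_hom[OF \<phi>])
  show "fst ` (C \<inter> der_subgroup \<phi> \<delta>) \<subseteq> carrier H"
    using C_onto by auto
  show "carrier H \<subseteq> fst ` (C \<inter> der_subgroup \<phi> \<delta>)"
  proof
    fix h assume h: "h \<in> carrier H"
    then obtain v where hv: "(h, v) \<in> C"
      using C_onto by force
    then have v: "v \<in> carrier V"
      using subgroup.mem_carrier[OF C hv] by simp
    have "inv\<^bsub>A\<^esub> \<phi> v \<otimes>\<^bsub>A\<^esub> \<delta> h \<in> \<phi> ` fibre C"
      using D_onto v der_closed[OF \<delta> h] by simp
    then obtain d where d: "d \<in> fibre C" "\<phi> d = inv\<^bsub>A\<^esub> \<phi> v \<otimes>\<^bsub>A\<^esub> \<delta> h"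
      by (metis imageE)
    have dV: "d \<in> carrier V"
      using fibre_subset[OF C] d(1) by blast
    have "(h, v \<otimes>\<^bsub>V\<^esub> d) \<in> C"
      by (rule fibre_mult[OF C hv d(1)])
    moreover have "\<phi> (v \<otimes>\<^bsub>V\<^esub> d) = \<delta> h"
      using v dV d(2) h der_closed[OF \<delta> h] by (simp add: A.m_assoc[symmetric])
    ultimately have "(h, v \<otimes>\<^bsub>V\<^esub> d) \<in> C \<inter> der_subgroup \<phi> \<delta>"
      using h v dV by simp
    then show "h \<in> fst ` (C \<inter> der_subgroup \<phi> \<delta>)"
      by (metis fst_conv image_eqI)
  qed
qed

lemma card_fibre_Int_der_subgroup:
  assumes C: "subgroup C G" and \<phi>: "module_hom \<phi>" and D_onto: "\<phi> ` fibre C = carrier A"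
    and \<delta>: "\<delta> \<in> derivations H A act"
  shows "card (fibre C) = card (carrier A) * card (fibre (C \<inter> der_subgroup \<phi> \<delta>))"
proof -
  let ?D = "fibre C"
  have sD: "subgroup ?D V"
    by (rule fibre_subgroup[OF C])
  have "\<phi> \<in> hom (V\<lparr>carrier := ?D\<rparr>) A"
    using subgroup.mem_carrier[OF sD] group_hom.hom_mult[OF module_hom_group_hom[OF \<phi>]]
      group_hom.hom_closed[OF module_hom_group_hom[OF \<phi>]]
    by (auto simp: hom_def)
  then interpret \<phi>D: group_hom "V\<lparr>carrier := ?D\<rparr>" A \<phi>
    using subgroup.subgroup_is_group[OF sD V.A.is_group]
    by (simp add: group_hom_def group_hom_axioms_def A.is_group)
  have "kernel (V\<lparr>carrier := ?D\<rparr>) A \<phi> = ?D \<inter> kernel V A \<phi>"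
    using subgroup.mem_carrier[OF sD] by (auto simp: kernel_def)
  also have "\<dots> = fibre (C \<inter> der_subgroup \<phi> \<delta>)"
    using fibre_der_subgroup[OF \<delta>, of \<phi>] by (auto simp: fibre_def)
  finally show ?thesis
    using \<phi>D.card_carrier_eq_card_mult_card_kernel D_onto by simp
qed

lemma derivation_module_hom_comp:
  assumes \<gamma>: "\<gamma> \<in> derivations H V diag_act" and \<phi>: "module_hom \<phi>"
  shows "(\<lambda>h\<in>carrier H. \<phi> (\<gamma> h)) \<in> derivations H A act"
  unfolding derivations_def
proof (intro CollectI conjI ballI)
  show "(\<lambda>h\<in>carrier H. \<phi> (\<gamma> h)) \<in> carrier H \<rightarrow>\<^sub>E carrier A"
    using V.der_closed[OF \<gamma>] group_hom.hom_closed[OF module_hom_group_hom[OF \<phi>]] by auto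
  fix h k assume h: "h \<in> carrier H" and k: "k \<in> carrier H"
  then show "(\<lambda>h\<in>carrier H. \<phi> (\<gamma> h)) (h \<otimes>\<^bsub>H\<^esub> k) =
      act ((\<lambda>h\<in>carrier H. \<phi> (\<gamma> h)) h) k \<otimes>\<^bsub>A\<^esub> (\<lambda>h\<in>carrier H. \<phi> (\<gamma> h)) k"
    using V.der_closed[OF \<gamma>]
    by (simp add: V.der_mult[OF \<gamma>] group_hom.hom_mult[OF module_hom_group_hom[OF \<phi>]]
        module_hom_act[OF \<phi>])
qed

lemma complement_derivation:
  assumes C: "subgroup C G" and C_onto: "fst ` C = carrier H" and fib: "fibre C = {\<one>\<^bsub>V\<^esub>}"
  obtains \<gamma> where "\<gamma> \<in> derivations H V diag_act" and "\<And>h. h \<in> carrier H \<Longrightarrow> (h, \<gamma> h) \<in> C"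
proof -
  have unique: "v = w" if "(h, v) \<in> C" "(h, w) \<in> C" for h v w
  proof -
    have "inv\<^bsub>V\<^esub> v \<otimes>\<^bsub>V\<^esub> w = \<one>\<^bsub>V\<^esub>"
      using fibre_quotient[OF C that] fib by simp
    then show ?thesis
      using subgroup.mem_carrier[OF C that(1)] subgroup.mem_carrier[OF C that(2)]
        V.A.inv_solve_left'[of "\<one>\<^bsub>V\<^esub>" v w] by simp
  qed
  define \<gamma> where "\<gamma> = (\<lambda>h\<in>carrier H. THE v. (h, v) \<in> C)"
  have \<gamma>_C: "(h, \<gamma> h) \<in> C" if "h \<in> carrier H" for h
  proof -
    have "h \<in> fst ` C"
      using C_onto that by simp
    then obtain v where "(h, v) \<in> C"
      by auto
    then show ?thesis
      using that unique by (simp add: \<gamma>_def the_equality)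
  qed
  have \<gamma>_V: "\<gamma> h \<in> carrier V" if "h \<in> carrier H" for h
    using subgroup.mem_carrier[OF C \<gamma>_C[OF that]] by simp
  have "\<gamma> \<in> derivations H V diag_act"
    unfolding derivations_def
  proof (intro CollectI conjI ballI)
    show "\<gamma> \<in> carrier H \<rightarrow>\<^sub>E carrier V"
      using \<gamma>_V by (simp add: \<gamma>_def PiE_iff)
    fix h k assume h: "h \<in> carrier H" and k: "k \<in> carrier H"
    have "(h, \<gamma> h) \<otimes>\<^bsub>G\<^esub> (k, \<gamma> k) \<in> C"
      using subgroup.m_closed[OF C \<gamma>_C[OF h] \<gamma>_C[OF k]] .
    then have "(h \<otimes>\<^bsub>H\<^esub> k, diag_act (\<gamma> h) k \<otimes>\<^bsub>V\<^esub> \<gamma> k) \<in> C"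
      by simp
    then show "\<gamma> (h \<otimes>\<^bsub>H\<^esub> k) = diag_act (\<gamma> h) k \<otimes>\<^bsub>V\<^esub> \<gamma> k"
      using unique \<gamma>_C[of "h \<otimes>\<^bsub>H\<^esub> k"] h k by blast
  qed
  then show thesis
    using \<gamma>_C that by blast
qed

definition coordinate_subgroup :: "nat \<Rightarrow> ('h \<times> (nat \<Rightarrow> 'a)) set" where
  "coordinate_subgroup j = der_subgroup (\<lambda>v. v j) (\<lambda>h\<in>carrier H. \<one>\<^bsub>A\<^esub>)"

lemma mem_coordinate_subgroup:
  "(h, v) \<in> coordinate_subgroup j \<longleftrightarrow> h \<in> carrier H \<and> v \<in> carrier V \<and> v j = \<one>\<^bsub>A\<^esub>"
  by (auto simp: coordinate_subgroup_def)

definition fibre_extension :: "('h \<times> (nat \<Rightarrow> 'a)) set \<Rightarrow> (nat \<Rightarrow> 'a) set \<Rightarrow> ('h \<times> (nat \<Rightarrow> 'a)) set" where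
  "fibre_extension M N = {(h, v \<otimes>\<^bsub>V\<^esub> n) | h v n. (h, v) \<in> M \<and> n \<in> N}"

lemma subgroup_fibre_extension:
  assumes M: "subgroup M G" and N: "V.H_submodule N"
  shows "subgroup (fibre_extension M N) G"
proof -
  have sN: "subgroup N V" and N_act: "\<And>n h. n \<in> N \<Longrightarrow> h \<in> carrier H \<Longrightarrow> diag_act n h \<in> N"
    using V.H_submodule_subgroup[OF N] V.H_submodule_act[OF N] by auto
  have M_mem: "h \<in> carrier H \<and> v \<in> carrier V" if "(h, v) \<in> M" for h v
    using subgroup.mem_carrier[OF M that] by simp
  have N_mem: "n \<in> carrier V" if "n \<in> N" for n
    using subgroup.mem_carrier[OF sN that] .
  show ?thesis
  proof (rule G.subgroupI)
    show "fibre_extension M N \<subseteq> carrier G"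
      using M_mem N_mem by (auto simp: fibre_extension_def)
    have "(\<one>\<^bsub>H\<^esub>, \<one>\<^bsub>V\<^esub> \<otimes>\<^bsub>V\<^esub> \<one>\<^bsub>V\<^esub>) \<in> fibre_extension M N"
      using subgroup.one_closed[OF M] subgroup.one_closed[OF sN] unfolding fibre_extension_def one_G by blast
    then show "fibre_extension M N \<noteq> {}"
      by blast
  next
    fix x assume "x \<in> fibre_extension M N"
    then obtain h v n where x: "x = (h, v \<otimes>\<^bsub>V\<^esub> n)" and hv: "(h, v) \<in> M" and n: "n \<in> N"
      by (auto simp: fibre_extension_def)
    have h: "h \<in> carrier H" and v: "v \<in> carrier V"
      using M_mem[OF hv] by auto
    have "inv\<^bsub>G\<^esub> x = inv\<^bsub>G\<^esub> (h, v) \<otimes>\<^bsub>G\<^esub> (\<one>\<^bsub>H\<^esub>, inv\<^bsub>V\<^esub> (diag_act n (inv\<^bsub>H\<^esub> h)))"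
      using h v N_mem[OF n] by (simp add: x inv_G V.act_mult V.A.inv_mult)
    moreover have "inv\<^bsub>G\<^esub> (h, v) \<in> M"
      using subgroup.m_inv_closed[OF M hv] .
    moreover have "inv\<^bsub>V\<^esub> (diag_act n (inv\<^bsub>H\<^esub> h)) \<in> N"
      using N_act n h subgroup.m_inv_closed[OF sN] by simp
    ultimately show "inv\<^bsub>G\<^esub> x \<in> fibre_extension M N"
      using h v by (auto simp: fibre_extension_def inv_G)
  next
    fix x y assume "x \<in> fibre_extension M N" "y \<in> fibre_extension M N"
    then obtain h v n k w m where x: "x = (h, v \<otimes>\<^bsub>V\<^esub> n)" and hv: "(h, v) \<in> M" and n: "n \<in> N"
      and y: "y = (k, w \<otimes>\<^bsub>V\<^esub> m)" and kw: "(k, w) \<in> M" and m: "m \<in> N"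
      by (auto simp: fibre_extension_def)
    have "x \<otimes>\<^bsub>G\<^esub> y = (h \<otimes>\<^bsub>H\<^esub> k, (diag_act v k \<otimes>\<^bsub>V\<^esub> w) \<otimes>\<^bsub>V\<^esub> (diag_act n k \<otimes>\<^bsub>V\<^esub> m))"
      using M_mem[OF hv] M_mem[OF kw] N_mem[OF n] N_mem[OF m] by (simp add: x y V.act_mult V.A.m_ac)
    moreover have "(h \<otimes>\<^bsub>H\<^esub> k, diag_act v k \<otimes>\<^bsub>V\<^esub> w) \<in> M"
      using subgroup.m_closed[OF M hv kw] by simp
    moreover have "diag_act n k \<otimes>\<^bsub>V\<^esub> m \<in> N"
      using N_act[OF n] M_mem[OF kw] m subgroup.m_closed[OF sN] by blast
    ultimately show "x \<otimes>\<^bsub>G\<^esub> y \<in> fibre_extension M N"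
      by (auto simp: fibre_extension_def)
  qed
qed

lemma subset_fibre_extension:
  assumes "subgroup M G" and "subgroup N V"
  shows "M \<subseteq> fibre_extension M N"
proof
  fix x assume "x \<in> M"
  moreover obtain h v where "x = (h, v)"
    by (cases x)
  moreover have "v \<in> carrier V"
    using subgroup.mem_carrier[OF assms(1) \<open>x \<in> M\<close>] \<open>x = (h, v)\<close> by simp
  ultimately show "x \<in> fibre_extension M N"
    using subgroup.one_closed[OF assms(2)] unfolding fibre_extension_def
    by (intro CollectI exI[of _ h] exI[of _ v] exI[of _ "\<one>\<^bsub>V\<^esub>"]) simp
qed

lemma fibre_fibre_extension:
  assumes "subgroup M G" and N: "subgroup N V" and "fibre M \<subseteq> N"
  shows "fibre (fibre_extension M N) = N"
proof
  show "fibre (fibre_extension M N) \<subseteq> N"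
    using assms subgroup.m_closed[OF N] by (auto simp: fibre_def fibre_extension_def)
  show "N \<subseteq> fibre (fibre_extension M N)"
  proof
    fix n assume n: "n \<in> N"
    then have "(\<one>\<^bsub>H\<^esub>, \<one>\<^bsub>V\<^esub> \<otimes>\<^bsub>V\<^esub> n) \<in> fibre_extension M N"
      using subgroup.one_closed[OF assms(1)] unfolding fibre_extension_def one_G by blast
    then show "n \<in> fibre (fibre_extension M N)"
      using subgroup.mem_carrier[OF N n] by (simp add: fibre_def)
  qed
qed

lemma maximal_subgroup_fibre_maximal:
  assumes M: "maximal_subgroup M G" and N: "V.H_submodule N" and MN: "fibre M \<subseteq> N"
  shows "N = fibre M \<or> N = carrier V"
proof -
  have sM: "subgroup M G"
    using M by (simp add: maximal_subgroup_def)
  have sN: "subgroup N V"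
    using V.H_submodule_subgroup[OF N] .
  have "fibre_extension M N = M \<or> fibre_extension M N = carrier G"
    using M subgroup_fibre_extension[OF sM N] subset_fibre_extension[OF sM sN]
    by (simp add: maximal_subgroup_def)
  then show ?thesis
    using fibre_fibre_extension[OF sM sN MN] fibre_Times_carrier_V[of "carrier H"]
    by (auto simp: carrier_G)
qed

definition single :: "nat \<Rightarrow> 'a \<Rightarrow> (nat \<Rightarrow> 'a)" where
  "single j a = (\<lambda>i\<in>{..<t}. if i = j then a else \<one>\<^bsub>A\<^esub>)"

lemma single_apply: "i < t \<Longrightarrow> single j a i = (if i = j then a else \<one>\<^bsub>A\<^esub>)"
  by (simp add: single_def)

lemma group_hom_single: "group_hom A V (single j)"
proof -
  have closed: "single j a \<in> carrier V" if "a \<in> carrier A" for a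
    using that by (simp add: single_def carrier_product_group PiE_iff)
  have "single j (a \<otimes>\<^bsub>A\<^esub> b) = single j a \<otimes>\<^bsub>V\<^esub> single j b"
    if "a \<in> carrier A" "b \<in> carrier A" for a b
    using that closed V.A.m_closed[OF closed closed]
    by (intro V_eqI) (simp_all add: single_apply mult_product_group)
  then show ?thesis
    using closed by (simp add: group_hom_def group_hom_axioms_def hom_def A.is_group V.A.is_group)
qed

lemma single_closed: "a \<in> carrier A \<Longrightarrow> single j a \<in> carrier V"
  using group_hom.hom_closed[OF group_hom_single] .

lemma single_one: "single j \<one>\<^bsub>A\<^esub> = \<one>\<^bsub>V\<^esub>"
  using group_hom.hom_one[OF group_hom_single] .

lemma single_mult: "a \<in> carrier A \<Longrightarrow> b \<in> carrier A \<Longrightarrow> single j (a \<otimes>\<^bsub>A\<^esub> b) = single j a \<otimes>\<^bsub>V\<^esub> single j b"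
  using group_hom.hom_mult[OF group_hom_single] .

lemma single_inv: "a \<in> carrier A \<Longrightarrow> single j (inv\<^bsub>A\<^esub> a) = inv\<^bsub>V\<^esub> single j a"
  using group_hom.hom_inv[OF group_hom_single] .

lemma diag_act_single: "a \<in> carrier A \<Longrightarrow> h \<in> carrier H \<Longrightarrow> diag_act (single j a) h = single j (act a h)"
  unfolding diag_act_def single_def by (rule restrict_ext) simp

lemma subgroup_eq_carrier_V_if_singles:
  assumes N: "subgroup N V" and singles: "\<And>j a. j < t \<Longrightarrow> a \<in> carrier A \<Longrightarrow> single j a \<in> N"
  shows "N = carrier V"
proof
  show "N \<subseteq> carrier V"
    using subgroup.subset[OF N] .
  show "carrier V \<subseteq> N"
  proof
    fix v assume v: "v \<in> carrier V"
    define prefix where "prefix k = (\<lambda>i\<in>{..<t}. if i < k then v i else \<one>\<^bsub>A\<^esub>)" for k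
    have prefix_closed: "prefix k \<in> carrier V" for k
      using v by (simp add: prefix_def carrier_product_group PiE_iff)
    have "prefix k \<in> N" for k
    proof (induction k)
      case 0
      have "prefix 0 = \<one>\<^bsub>V\<^esub>"
        unfolding prefix_def one_product_group by simp
      then show ?case
        using subgroup.one_closed[OF N] by simp
    next
      case (Suc k)
      show ?case
      proof (cases "k < t")
        case True
        have "prefix (Suc k) = prefix k \<otimes>\<^bsub>V\<^esub> single k (v k)"
        proof (rule V_eqI)
          fix i assume "i < t"
          then show "prefix (Suc k) i = (prefix k \<otimes>\<^bsub>V\<^esub> single k (v k)) i"
            using V_mem[OF v] by (simp add: prefix_def single_def mult_product_group)
        qed (use prefix_closed single_closed V_mem[OF v True] in \<open>simp_all add: V.A.m_closed\<close>)
        then show ?thesis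
          using subgroup.m_closed[OF N Suc.IH singles[OF True V_mem[OF v True]]] by simp
      next
        case False
        then have "prefix (Suc k) = prefix k"
          using False by (simp add: prefix_def less_Suc_eq cong: restrict_cong)
        then show ?thesis
          using Suc.IH by simp
      qed
    qed
    moreover have "prefix t = v"
      using v by (intro V_eqI prefix_closed) (simp_all add: prefix_def)
    ultimately show "v \<in> N"
      by metis
  qed
qed

lemma H_submodule_single_preimage:
  assumes N: "V.H_submodule N"
  shows "H_submodule {b \<in> carrier A. single j b \<in> N}"
proof (rule H_submoduleI)
  have sN: "subgroup N V" and N_act: "\<And>n h. n \<in> N \<Longrightarrow> h \<in> carrier H \<Longrightarrow> diag_act n h \<in> N"
    using V.H_submodule_subgroup[OF N] V.H_submodule_act[OF N] by auto
  show "subgroup {b \<in> carrier A. single j b \<in> N} A"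
  proof (rule A.subgroupI)
    have "\<one>\<^bsub>A\<^esub> \<in> {b \<in> carrier A. single j b \<in> N}"
      using subgroup.one_closed[OF sN] by (simp add: single_one)
    then show "{b \<in> carrier A. single j b \<in> N} \<noteq> {}"
      by blast
  qed (auto simp: single_inv single_mult subgroup.m_inv_closed[OF sN] subgroup.m_closed[OF sN])
  fix b h assume "b \<in> {b \<in> carrier A. single j b \<in> N}" and h: "h \<in> carrier H"
  then show "act b h \<in> {b \<in> carrier A. single j b \<in> N}"
    using N_act[of "single j b" h] by (simp add: diag_act_single)
qed

lemma H_submodule_set_mult_single:
  assumes N: "V.H_submodule N"
  shows "V.H_submodule (N <#>\<^bsub>V\<^esub> single j ` carrier A)"
proof (rule V.H_submoduleI)
  have sN: "subgroup N V" and N_act: "\<And>n h. n \<in> N \<Longrightarrow> h \<in> carrier H \<Longrightarrow> diag_act n h \<in> N"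
    using V.H_submodule_subgroup[OF N] V.H_submodule_act[OF N] by auto
  show "subgroup (N <#>\<^bsub>V\<^esub> single j ` carrier A) V"
    using group_hom.subgroup_img_is_subgroup[OF group_hom_single A.subgroup_self]
    by (intro V.A.mult_subgroups sN)
  fix x h assume "x \<in> N <#>\<^bsub>V\<^esub> single j ` carrier A" and h: "h \<in> carrier H"
  then obtain n b where x: "x = n \<otimes>\<^bsub>V\<^esub> single j b" and n: "n \<in> N" and b: "b \<in> carrier A"
    by (auto simp: set_mult_def)
  have "diag_act x h = diag_act n h \<otimes>\<^bsub>V\<^esub> single j (act b h)"
    using n b h subgroup.mem_carrier[OF sN n] by (simp add: x V.act_mult single_closed diag_act_single)
  then show "diag_act x h \<in> N <#>\<^bsub>V\<^esub> single j ` carrier A"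
    using N_act[OF n h] act_closed[OF b h] unfolding set_mult_def by blast
qed

context
  fixes N j
  assumes N: "V.H_submodule N"
    and single_trivial: "\<And>b. b \<in> carrier A \<Longrightarrow> single j b \<in> N \<Longrightarrow> b = \<one>\<^bsub>A\<^esub>"
    and spans: "N <#>\<^bsub>V\<^esub> single j ` carrier A = carrier V"
begin

definition single_coordinate :: "(nat \<Rightarrow> 'a) \<Rightarrow> 'a" where
  "single_coordinate v = (THE b. b \<in> carrier A \<and> (\<exists>n\<in>N. v = n \<otimes>\<^bsub>V\<^esub> single j b))"

lemma single_decomposition_unique:
  assumes b: "b \<in> carrier A" "n \<in> N" and c: "c \<in> carrier A" "m \<in> N"
    and eq: "n \<otimes>\<^bsub>V\<^esub> single j b = m \<otimes>\<^bsub>V\<^esub> single j c"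
  shows "b = c"
proof -
  have nm: "n \<in> carrier V" "m \<in> carrier V" and bc: "single j b \<in> carrier V" "single j c \<in> carrier V"
    using b c subgroup.mem_carrier[OF V.H_submodule_subgroup[OF N]] single_closed by auto
  have "single j b = inv\<^bsub>V\<^esub> n \<otimes>\<^bsub>V\<^esub> (m \<otimes>\<^bsub>V\<^esub> single j c)"
    using eq nm bc by (simp add: V.A.inv_solve_left)
  then have "single j b \<otimes>\<^bsub>V\<^esub> inv\<^bsub>V\<^esub> single j c = inv\<^bsub>V\<^esub> n \<otimes>\<^bsub>V\<^esub> m"
    using nm bc by (simp add: V.A.inv_solve_right' V.A.m_assoc)
  then have "single j (b \<otimes>\<^bsub>A\<^esub> inv\<^bsub>A\<^esub> c) \<in> N"
    using b c subgroup.m_closed[OF V.H_submodule_subgroup[OF N] subgroup.m_inv_closed[OF V.H_submodule_subgroup[OF N]]]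
    by (simp add: single_mult single_inv)
  then have "b \<otimes>\<^bsub>A\<^esub> inv\<^bsub>A\<^esub> c = \<one>\<^bsub>A\<^esub>"
    using b c by (intro single_trivial) simp_all
  then show "b = c"
    using b c by (simp add: A.inv_solve_right')
qed

lemma single_coordinate_eq:
  assumes "b \<in> carrier A" and "n \<in> N"
  shows "single_coordinate (n \<otimes>\<^bsub>V\<^esub> single j b) = b"
  unfolding single_coordinate_def
proof (rule the_equality)
  show "b \<in> carrier A \<and> (\<exists>m\<in>N. n \<otimes>\<^bsub>V\<^esub> single j b = m \<otimes>\<^bsub>V\<^esub> single j b)"
    using assms by blast
  fix c assume "c \<in> carrier A \<and> (\<exists>m\<in>N. n \<otimes>\<^bsub>V\<^esub> single j b = m \<otimes>\<^bsub>V\<^esub> single j c)"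
  then show "c = b"
    using single_decomposition_unique assms by metis
qed

lemma single_decomposition:
  assumes "v \<in> carrier V"
  obtains n b where "n \<in> N" and "b \<in> carrier A" and "v = n \<otimes>\<^bsub>V\<^esub> single j b"
  using assms spans unfolding set_mult_def by blast

lemma module_hom_single_coordinate: "module_hom single_coordinate"
proof -
  have NV: "\<And>n. n \<in> N \<Longrightarrow> n \<in> carrier V"
    using subgroup.mem_carrier[OF V.H_submodule_subgroup[OF N]] .
  have "single_coordinate v \<in> carrier A" if "v \<in> carrier V" for v
    using single_decomposition[OF that] single_coordinate_eq by metis
  moreover have "single_coordinate (v \<otimes>\<^bsub>V\<^esub> w) = single_coordinate v \<otimes>\<^bsub>A\<^esub> single_coordinate w"
    if v: "v \<in> carrier V" and w: "w \<in> carrier V" for v w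
  proof -
    obtain n a m b where n: "n \<in> N" "a \<in> carrier A" "v = n \<otimes>\<^bsub>V\<^esub> single j a"
      and m: "m \<in> N" "b \<in> carrier A" "w = m \<otimes>\<^bsub>V\<^esub> single j b"
      using single_decomposition[OF v] single_decomposition[OF w] by metis
    have "v \<otimes>\<^bsub>V\<^esub> w = (n \<otimes>\<^bsub>V\<^esub> m) \<otimes>\<^bsub>V\<^esub> single j (a \<otimes>\<^bsub>A\<^esub> b)"
      using n m NV single_closed by (simp add: single_mult V.A.m_ac)
    then show ?thesis
      using n m single_coordinate_eq subgroup.m_closed[OF V.H_submodule_subgroup[OF N]] by simp
  qed
  moreover have "single_coordinate (diag_act v h) = act (single_coordinate v) h"
    if v: "v \<in> carrier V" and h: "h \<in> carrier H" for v h
  proof -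
    obtain n a where n: "n \<in> N" "a \<in> carrier A" "v = n \<otimes>\<^bsub>V\<^esub> single j a"
      using single_decomposition[OF v] by metis
    have "diag_act v h = diag_act n h \<otimes>\<^bsub>V\<^esub> single j (act a h)"
      using n h NV single_closed by (simp add: V.act_mult diag_act_single)
    then show ?thesis
      using n h V.H_submodule_act[OF N] single_coordinate_eq by simp
  qed
  ultimately show ?thesis
    by (auto simp: module_hom_def group_hom_def group_hom_axioms_def hom_def V.A.is_group A.is_group)
qed

lemma single_coordinate_onto: "single_coordinate ` carrier V = carrier A"
proof
  show "single_coordinate ` carrier V \<subseteq> carrier A"
    using group_hom.hom_closed[OF module_hom_group_hom[OF module_hom_single_coordinate]] by blast
  have "b = single_coordinate (single j b)" if "b \<in> carrier A" for b
    using single_coordinate_eq[OF that subgroup.one_closed[OF V.H_submodule_subgroup[OF N]]] single_closed[OF that] by simp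
  then show "carrier A \<subseteq> single_coordinate ` carrier V"
    using single_closed by blast
qed

lemma kernel_single_coordinate: "kernel V A single_coordinate = N"
proof -
  have "single_coordinate v = \<one>\<^bsub>A\<^esub> \<longleftrightarrow> v \<in> N" if v: "v \<in> carrier V" for v
  proof -
    obtain n a where n: "n \<in> N" "a \<in> carrier A" "v = n \<otimes>\<^bsub>V\<^esub> single j a"
      using single_decomposition[OF v] by metis
    have nV: "n \<in> carrier V"
      using subgroup.mem_carrier[OF V.H_submodule_subgroup[OF N] n(1)] .
    have "a = \<one>\<^bsub>A\<^esub> \<longleftrightarrow> v \<in> N"
    proof
      assume "v \<in> N"
      then have "inv\<^bsub>V\<^esub> n \<otimes>\<^bsub>V\<^esub> v \<in> N"
        using n(1) subgroup.m_closed[OF V.H_submodule_subgroup[OF N] subgroup.m_inv_closed[OF V.H_submodule_subgroup[OF N]]] by blast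
      moreover have "inv\<^bsub>V\<^esub> n \<otimes>\<^bsub>V\<^esub> v = single j a"
        using n nV single_closed by (simp add: V.A.m_assoc[symmetric] V.A.l_inv)
      ultimately show "a = \<one>\<^bsub>A\<^esub>"
        using single_trivial n(2) by simp
    qed (use n nV in \<open>simp add: single_one\<close>)
    then show ?thesis
      using n single_coordinate_eq by simp
  qed
  then show ?thesis
    using subgroup.mem_carrier[OF V.H_submodule_subgroup[OF N]] by (auto simp: kernel_def)
qed

end

end

section \<open>Maximal subgroups\<close>

locale irreducible_power = module_power H A act t
  for H :: "'h monoid" and A :: "'a monoid" and act :: "'a \<Rightarrow> 'h \<Rightarrow> 'a" and t :: nat +
  assumes irreducible: "irreducible_module H A act"
begin

lemma H_submodule_cases: "H_submodule B \<Longrightarrow> B = {\<one>\<^bsub>A\<^esub>} \<or> B = carrier A"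
  using irreducible by (simp add: irreducible_module_def H_submodule_def)

lemma carrier_A_nontrivial: "carrier A \<noteq> {\<one>\<^bsub>A\<^esub>}"
  using irreducible by (simp add: irreducible_module_def)

lemma image_H_submodule_eq_carrier:
  assumes \<phi>: "module_hom \<phi>" and D: "V.H_submodule D" and D_ker: "\<not> D \<subseteq> kernel V A \<phi>"
  shows "\<phi> ` D = carrier A"
proof -
  obtain d where "d \<in> D" "d \<notin> kernel V A \<phi>"
    using D_ker by blast
  moreover have "d \<in> carrier V"
    using subgroup.mem_carrier[OF V.H_submodule_subgroup[OF D] \<open>d \<in> D\<close>] .
  ultimately have "\<phi> ` D \<noteq> {\<one>\<^bsub>A\<^esub>}"
    by (auto simp: kernel_def)
  then show ?thesis
    using H_submodule_cases[OF H_submodule_image[OF \<phi> D]] by blast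
qed

lemma fst_image_der_subgroup:
  assumes \<phi>_onto: "\<phi> ` carrier V = carrier A" and \<delta>: "\<delta> \<in> derivations H A act"
  shows "fst ` der_subgroup \<phi> \<delta> = carrier H"
proof
  show "fst ` der_subgroup \<phi> \<delta> \<subseteq> carrier H"
    by (auto simp: der_subgroup_def)
  show "carrier H \<subseteq> fst ` der_subgroup \<phi> \<delta>"
  proof
    fix h assume h: "h \<in> carrier H"
    then obtain v where "v \<in> carrier V" "\<phi> v = \<delta> h"
      using \<phi>_onto der_closed[OF \<delta> h] by (metis imageE)
    then have "(h, v) \<in> der_subgroup \<phi> \<delta>"
      using h by simp
    then show "h \<in> fst ` der_subgroup \<phi> \<delta>"
      by (metis fst_conv image_eqI)
  qed
qed

lemma der_subgroup_ne_carrier: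
  assumes \<phi>_onto: "\<phi> ` carrier V = carrier A" and \<delta>: "\<delta> \<in> derivations H A act"
  shows "der_subgroup \<phi> \<delta> \<noteq> carrier G"
proof -
  obtain a where a: "a \<in> carrier A" "a \<noteq> \<one>\<^bsub>A\<^esub>"
    using carrier_A_nontrivial A.one_closed by blast
  then obtain v where "v \<in> carrier V" "\<phi> v = a"
    using \<phi>_onto by (metis imageE)
  then have "(\<one>\<^bsub>H\<^esub>, v) \<in> carrier G - der_subgroup \<phi> \<delta>"
    using a der_one[OF \<delta>] by simp
  then show ?thesis
    by blast
qed

lemma supergroup_der_subgroup_eq_carrier:
  assumes \<phi>: "module_hom \<phi>" and \<phi>_onto: "\<phi> ` carrier V = carrier A"
    and \<delta>: "\<delta> \<in> derivations H A act"
    and L: "subgroup L G" and M_sub_L: "der_subgroup \<phi> \<delta> \<subseteq> L" and L_ne: "L \<noteq> der_subgroup \<phi> \<delta>"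
  shows "L = carrier G"
proof -
  interpret \<phi>: group_hom V A \<phi>
    by (rule module_hom_group_hom[OF \<phi>])
  let ?M = "der_subgroup \<phi> \<delta>"
  obtain x where "x \<in> L" "x \<notin> ?M"
    using M_sub_L L_ne by blast
  then obtain h w where hw: "(h, w) \<in> L" "(h, w) \<notin> ?M"
    by (cases x) blast
  have h: "h \<in> carrier H" and w: "w \<in> carrier V"
    using subgroup.mem_carrier[OF L hw(1)] by auto
  obtain v where v: "v \<in> carrier V" "\<phi> v = \<delta> h"
    using \<phi>_onto der_closed[OF \<delta> h] by (metis imageE)
  then have "(h, v) \<in> L"
    using h M_sub_L by auto
  then have "inv\<^bsub>V\<^esub> v \<otimes>\<^bsub>V\<^esub> w \<in> fibre L"
    by (rule fibre_quotient[OF L _ hw(1)])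
  moreover have "\<phi> (inv\<^bsub>V\<^esub> v \<otimes>\<^bsub>V\<^esub> w) \<noteq> \<one>\<^bsub>A\<^esub>"
    using v w h hw(2) der_closed[OF \<delta> h] by (simp add: A.inv_solve_left')
  ultimately have not_ker: "\<not> fibre L \<subseteq> kernel V A \<phi>"
    by (auto simp: kernel_def)
  have "carrier H \<subseteq> fst ` L"
    using fst_image_der_subgroup[OF \<phi>_onto \<delta>] image_mono[OF M_sub_L, of fst] by simp
  then have onto: "fst ` L = carrier H"
    using subgroup.subset[OF fst_subgroup[OF L]] by blast
  have "fibre ?M \<subseteq> fibre L"
    using M_sub_L by (auto simp: fibre_def)
  then have "kernel V A \<phi> \<subseteq> fibre L"
    by (simp add: fibre_der_subgroup[OF \<delta>])
  moreover have "\<phi> ` fibre L = \<phi> ` carrier V"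
    using image_H_submodule_eq_carrier[OF \<phi> H_submodule_fibre[OF L onto] not_ker] \<phi>_onto by simp
  ultimately have "fibre L = carrier V"
    by (rule \<phi>.subgroup_eq_carrier_if_image_eq[OF fibre_subgroup[OF L]])
  then show ?thesis
    using subgroup_eq_Times_carrier_V[OF L] onto by (simp add: carrier_G)
qed

lemma maximal_der_subgroup:
  assumes \<phi>: "module_hom \<phi>" and \<phi>_onto: "\<phi> ` carrier V = carrier A"
    and \<delta>: "\<delta> \<in> derivations H A act"
  shows "maximal_subgroup (der_subgroup \<phi> \<delta>) G"
  using subgroup_der_subgroup[OF \<phi> \<delta>] der_subgroup_ne_carrier[OF \<phi>_onto \<delta>]
    supergroup_der_subgroup_eq_carrier[OF \<phi> \<phi>_onto \<delta>]
  unfolding maximal_subgroup_def by blast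

lemma maximal_coordinate_subgroup: "j < t \<Longrightarrow> maximal_subgroup (coordinate_subgroup j) G"
  unfolding coordinate_subgroup_def
  using module_hom_coordinate maximal_der_subgroup derivation_const_one by blast

lemma maximal_subgroup_fibre_eq_kernel:
  assumes M: "maximal_subgroup M G" and fib: "fibre M \<noteq> carrier V"
  obtains \<phi> where "module_hom \<phi>" and "\<phi> ` carrier V = carrier A" and "kernel V A \<phi> = fibre M"
proof -
  have sM: "subgroup M G"
    using M by (simp add: maximal_subgroup_def)
  let ?N = "fibre M"
  have N: "V.H_submodule ?N"
    by (rule H_submodule_fibre[OF sM maximal_fst_image_eq_carrier[OF M fib]])
  then have sN: "subgroup ?N V"
    by (rule V.H_submodule_subgroup)
  obtain j a where a: "a \<in> carrier A" "single j a \<notin> ?N"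
    using subgroup_eq_carrier_V_if_singles[OF sN] fib by blast
  have trivial: "b = \<one>\<^bsub>A\<^esub>" if "b \<in> carrier A" "single j b \<in> ?N" for b
    using H_submodule_cases[OF H_submodule_single_preimage[OF N]] a that by blast
  let ?S = "?N <#>\<^bsub>V\<^esub> single j ` carrier A"
  have "?N \<subseteq> ?S"
  proof
    fix n assume n: "n \<in> ?N"
    then have "n = n \<otimes>\<^bsub>V\<^esub> single j \<one>\<^bsub>A\<^esub>"
      using subgroup.mem_carrier[OF sN n] by (simp add: single_one)
    then show "n \<in> ?S"
      using n unfolding set_mult_def by blast
  qed
  moreover have "single j a \<in> ?S"
  proof -
    have "single j a = \<one>\<^bsub>V\<^esub> \<otimes>\<^bsub>V\<^esub> single j a"
      using single_closed[OF a(1)] by simp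
    then show ?thesis
      using a(1) subgroup.one_closed[OF sN] unfolding set_mult_def by blast
  qed
  ultimately have spans: "?S = carrier V"
    using maximal_subgroup_fibre_maximal[OF M H_submodule_set_mult_single[OF N]] a by blast
  show thesis
    by (rule that[OF module_hom_single_coordinate[OF N trivial spans]
          single_coordinate_onto[OF N trivial spans] kernel_single_coordinate[OF N trivial spans]])
qed

theorem maximal_subgroup_eq_der_subgroup:
  assumes M: "maximal_subgroup M G" and fib: "fibre M \<noteq> carrier V"
  obtains \<phi> \<delta> where "module_hom \<phi>" and "\<phi> ` carrier V = carrier A"
    and "\<delta> \<in> derivations H A act" and "M = der_subgroup \<phi> \<delta>"
proof -
  have sM: "subgroup M G"
    and M_max: "\<And>L. subgroup L G \<Longrightarrow> M \<subseteq> L \<Longrightarrow> L = M \<or> L = carrier G"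
    using M by (auto simp: maximal_subgroup_def)
  obtain \<phi> where \<phi>: "module_hom \<phi>" and \<phi>_onto: "\<phi> ` carrier V = carrier A"
    and ker: "kernel V A \<phi> = fibre M"
    using maximal_subgroup_fibre_eq_kernel[OF M fib] by blast
  obtain \<delta> where \<delta>: "\<delta> \<in> derivations H A act" and "M \<subseteq> der_subgroup \<phi> \<delta>"
    using exists_derivation_of_supplement[OF sM maximal_fst_image_eq_carrier[OF M fib] \<phi> ker] by blast
  then have "M = der_subgroup \<phi> \<delta>"
    using M_max[OF subgroup_der_subgroup[OF \<phi> \<delta>]] maximal_der_subgroup[OF \<phi> \<phi>_onto \<delta>]
    unfolding maximal_subgroup_def by blast
  with \<phi> \<phi>_onto \<delta> show thesis
    by (rule that)
qed

lemma complement_trace_in_Lambda: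
  assumes \<gamma>: "\<gamma> \<in> derivations H V diag_act" and M: "maximal_subgroup M G"
  shows "{h \<in> carrier H. (h, \<gamma> h) \<in> M} \<in> Lambda H A act"
proof (cases "fibre M = carrier V")
  case True
  have sM: "subgroup M G"
    using M by (simp add: maximal_subgroup_def)
  have M_eq: "M = fst ` M \<times> carrier V"
    by (rule subgroup_eq_Times_carrier_V[OF sM True])
  have "{h \<in> carrier H. (h, \<gamma> h) \<in> M} = fst ` M"
  proof
    show "{h \<in> carrier H. (h, \<gamma> h) \<in> M} \<subseteq> fst ` M"
      by (auto intro: image_eqI[of _ fst "(_, \<gamma> _)"])
    show "fst ` M \<subseteq> {h \<in> carrier H. (h, \<gamma> h) \<in> M}"
    proof
      fix h assume h: "h \<in> fst ` M"
      then have "h \<in> carrier H"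
        using subgroup.subset[OF fst_subgroup[OF sM]] by blast
      moreover have "(h, \<gamma> h) \<in> M"
        using M_eq h V.der_closed[OF \<gamma> \<open>h \<in> carrier H\<close>] by blast
      ultimately show "h \<in> {h \<in> carrier H. (h, \<gamma> h) \<in> M}"
        by simp
    qed
  qed
  then show ?thesis
    using maximal_fst_image[OF M True] by (simp add: Lambda_def)
next
  case False
  then obtain \<phi> \<delta> where \<phi>: "module_hom \<phi>" and \<delta>: "\<delta> \<in> derivations H A act"
    and M_eq: "M = der_subgroup \<phi> \<delta>"
    using maximal_subgroup_eq_der_subgroup[OF M] by metis
  let ?\<epsilon> = "\<lambda>h\<in>carrier H. \<phi> (\<gamma> h)"
  have \<epsilon>: "?\<epsilon> \<in> derivations H A act"
    by (rule derivation_module_hom_comp[OF \<gamma> \<phi>])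
  have "{h \<in> carrier H. (h, \<gamma> h) \<in> M} = {h \<in> carrier H. ?\<epsilon> h = \<delta> h}"
    using V.der_closed[OF \<gamma>] by (auto simp: M_eq)
  also have "\<dots> = der_kernel H A (\<lambda>h\<in>carrier H. ?\<epsilon> h \<otimes>\<^bsub>A\<^esub> inv\<^bsub>A\<^esub> \<delta> h)"
    by (rule der_kernel_quotient[OF \<epsilon> \<delta>, symmetric])
  finally show ?thesis
    using derivation_quotient[OF \<epsilon> \<delta>] by (simp add: Lambda_def)
qed

lemma exists_supplement_cutting_fibre:
  assumes F_max: "F \<subseteq> {M. maximal_subgroup M G}" and F_int: "carrier G \<inter> \<Inter>F = {\<one>\<^bsub>G\<^esub>}"
    and C: "subgroup C G" and onto: "fst ` C = carrier H"
    and v: "v \<in> fibre C" "v \<noteq> \<one>\<^bsub>V\<^esub>"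
  obtains M where "M \<in> F" and "\<not> C \<subseteq> M" and "fst ` (C \<inter> M) = carrier H"
    and "card (fibre C) = card (carrier A) * card (fibre (C \<inter> M))"
proof -
  have vV: "v \<in> carrier V"
    using fibre_subset[OF C] v(1) by blast
  then have "(\<one>\<^bsub>H\<^esub>, v) \<in> carrier G - {\<one>\<^bsub>G\<^esub>}"
    using v(2) by (simp add: one_G)
  then obtain M where M_F: "M \<in> F" and vM: "(\<one>\<^bsub>H\<^esub>, v) \<notin> M"
    using F_int by blast
  have M: "maximal_subgroup M G"
    using M_F F_max by blast
  have "\<not> C \<subseteq> M" and "v \<notin> fibre M"
    using v(1) vM by (auto simp: fibre_def)
  then obtain \<phi> \<delta> where \<phi>: "module_hom \<phi>" and \<phi>_onto: "\<phi> ` carrier V = carrier A"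
    and \<delta>: "\<delta> \<in> derivations H A act" and M_eq: "M = der_subgroup \<phi> \<delta>"
    using maximal_subgroup_eq_der_subgroup[OF M] vV by metis
  have "\<not> fibre C \<subseteq> kernel V A \<phi>"
    using v(1) \<open>v \<notin> fibre M\<close> fibre_der_subgroup[OF \<delta>] M_eq by auto
  then have "\<phi> ` fibre C = carrier A"
    by (rule image_H_submodule_eq_carrier[OF \<phi> H_submodule_fibre[OF C onto]])
  with M_F \<open>\<not> C \<subseteq> M\<close> show thesis
    using fst_image_Int_der_subgroup[OF C onto \<phi> _ \<delta>] card_fibre_Int_der_subgroup[OF C \<phi> _ \<delta>] M_eq that
    by blast
qed

end

section \<open>The invariant \<alpha>(G)\<close>

locale faithful_irreducible_power = irreducible_power H A act t
  for H :: "'h monoid" and A :: "'a monoid" and act :: "'a \<Rightarrow> 'h \<Rightarrow> 'a" and t :: nat +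
  assumes finite_A: "finite (carrier A)"
    and faithful: "faithful_module H A act"
    and t_pos: "0 < t"
begin

lemma card_A_gt_one: "1 < card (carrier A)"
proof -
  obtain a where "a \<in> carrier A" "a \<noteq> \<one>\<^bsub>A\<^esub>"
    using carrier_A_nontrivial A.one_closed by blast
  then have "card {a, \<one>\<^bsub>A\<^esub>} \<le> card (carrier A)"
    by (intro card_mono[OF finite_A]) simp
  then show ?thesis
    using \<open>a \<noteq> \<one>\<^bsub>A\<^esub>\<close> by simp
qed

definition Lambda_lift :: "'h set \<Rightarrow> ('h \<times> (nat \<Rightarrow> 'a)) set" where
  "Lambda_lift K = (SOME M. maximal_subgroup M G \<and> (\<forall>h v. (h, v) \<in> M \<longrightarrow> v 0 = \<one>\<^bsub>A\<^esub> \<longrightarrow> h \<in> K))"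

lemma Lambda_lift:
  assumes "K \<in> Lambda H A act"
  shows "maximal_subgroup (Lambda_lift K) G \<and> (\<forall>h v. (h, v) \<in> Lambda_lift K \<longrightarrow> v 0 = \<one>\<^bsub>A\<^esub> \<longrightarrow> h \<in> K)"
proof -
  have "\<exists>M. maximal_subgroup M G \<and> (\<forall>h v. (h, v) \<in> M \<longrightarrow> v 0 = \<one>\<^bsub>A\<^esub> \<longrightarrow> h \<in> K)"
  proof (cases "maximal_subgroup K H")
    case True
    then show ?thesis
      using maximal_Times_carrier_V by blast
  next
    case False
    then obtain \<delta> where \<delta>: "\<delta> \<in> derivations H A act" and K: "K = der_kernel H A \<delta>"
      using assms by (auto simp: Lambda_def)
    have "maximal_subgroup (der_subgroup (\<lambda>v. v 0) \<delta>) G"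
      using module_hom_coordinate[OF t_pos] maximal_der_subgroup \<delta> by blast
    then show ?thesis
      by (auto simp: K der_kernel_def)
  qed
  then show ?thesis
    unfolding Lambda_lift_def by (rule someI_ex)
qed

lemma Inter_coordinate_subgroups_Lambda_lift:
  assumes Fs: "Fs \<subseteq> Lambda H A act" and Fs_int: "carrier H \<inter> \<Inter>Fs = {\<one>\<^bsub>H\<^esub>}"
  shows "carrier G \<inter> \<Inter>(coordinate_subgroup ` {..<t} \<union> Lambda_lift ` Fs) = {\<one>\<^bsub>G\<^esub>}"
proof
  show "carrier G \<inter> \<Inter>(coordinate_subgroup ` {..<t} \<union> Lambda_lift ` Fs) \<subseteq> {\<one>\<^bsub>G\<^esub>}"
  proof
    fix x assume "x \<in> carrier G \<inter> \<Inter>(coordinate_subgroup ` {..<t} \<union> Lambda_lift ` Fs)"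
    then obtain h v where x: "x = (h, v)" and hv: "(h, v) \<in> carrier G"
      and x_in: "\<forall>M \<in> coordinate_subgroup ` {..<t} \<union> Lambda_lift ` Fs. (h, v) \<in> M"
      by (cases x) auto
    have "v j = \<one>\<^bsub>A\<^esub>" if "j < t" for j
      using x_in that mem_coordinate_subgroup by blast
    then have "v = \<one>\<^bsub>V\<^esub>"
      using hv V.A.one_closed by (intro V_eqI) (simp_all add: one_product_group)
    then have "v 0 = \<one>\<^bsub>A\<^esub>"
      using t_pos by (simp add: one_product_group)
    then have "h \<in> K" if "K \<in> Fs" for K
      using Lambda_lift[OF subsetD[OF Fs that]] x_in that by blast
    then have "h = \<one>\<^bsub>H\<^esub>"
      using hv Fs_int by auto
    with \<open>v = \<one>\<^bsub>V\<^esub>\<close> show "x \<in> {\<one>\<^bsub>G\<^esub>}"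
      by (simp add: x one_G)
  qed
  show "{\<one>\<^bsub>G\<^esub>} \<subseteq> carrier G \<inter> \<Inter>(coordinate_subgroup ` {..<t} \<union> Lambda_lift ` Fs)"
    using maximal_coordinate_subgroup Lambda_lift Fs subgroup.one_closed
    by (fastforce simp: maximal_subgroup_def)
qed

lemma exists_maximal_family_Inter_eq_one:
  obtains F where "F \<subseteq> {M. maximal_subgroup M G}" and "finite F"
    and "card F \<le> t + sigma H A act" and "carrier G \<inter> \<Inter>F = {\<one>\<^bsub>G\<^esub>}"
proof -
  obtain Fs where Fs: "Fs \<subseteq> Lambda H A act" "finite Fs" "card Fs = sigma H A act"
    "carrier H \<inter> \<Inter>Fs = {\<one>\<^bsub>H\<^esub>}"
    using sigma_attained[OF finite_A faithful] by blast
  let ?F = "coordinate_subgroup ` {..<t} \<union> Lambda_lift ` Fs"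
  have "?F \<subseteq> {M. maximal_subgroup M G}"
    using maximal_coordinate_subgroup Lambda_lift Fs(1) by auto
  moreover have "card ?F \<le> t + sigma H A act"
  proof -
    have "card ?F \<le> card (coordinate_subgroup ` {..<t}) + card (Lambda_lift ` Fs)"
      by (rule card_Un_le)
    also have "\<dots> \<le> t + card Fs"
      using card_image_le[of "{..<t}"] card_image_le[OF Fs(2)] by (intro add_mono) simp_all
    finally show ?thesis
      using Fs(3) by simp
  qed
  moreover have "finite ?F"
    using Fs(2) by simp
  ultimately show thesis
    using that Inter_coordinate_subgroups_Lambda_lift[OF Fs(1,4)] by blast
qed

lemma frattini_semidirect_power: "frattini G = {\<one>\<^bsub>G\<^esub>}"
proof -
  obtain F where F: "F \<subseteq> {M. maximal_subgroup M G}" "finite F" "card F \<le> t + sigma H A act"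
    "carrier G \<inter> \<Inter>F = {\<one>\<^bsub>G\<^esub>}"
    by (rule exists_maximal_family_Inter_eq_one)
  have "frattini G \<subseteq> carrier G \<inter> \<Inter>F"
    using F(1) by (auto simp: frattini_def)
  moreover have "\<one>\<^bsub>G\<^esub> \<in> M" if "maximal_subgroup M G" for M
    using that subgroup.one_closed unfolding maximal_subgroup_def by blast
  then have "\<one>\<^bsub>G\<^esub> \<in> frattini G"
    by (simp add: frattini_def)
  ultimately show ?thesis
    using F(4) by blast
qed

lemma alpha_le_sigma: "alpha G \<le> t + sigma H A act"
proof -
  obtain F where F: "F \<subseteq> {M. maximal_subgroup M G}" "finite F" "card F \<le> t + sigma H A act"
    "carrier G \<inter> \<Inter>F = {\<one>\<^bsub>G\<^esub>}"
    by (rule exists_maximal_family_Inter_eq_one)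
  then have "alpha G \<le> card F"
    unfolding alpha_def frattini_semidirect_power by (intro Least_le) blast
  with F(3) show ?thesis
    by simp
qed

lemma exists_projecting_subfamily:
  assumes F_max: "F \<subseteq> {M. maximal_subgroup M G}" and F_int: "carrier G \<inter> \<Inter>F = {\<one>\<^bsub>G\<^esub>}"
    and "k \<le> t"
  shows "\<exists>S \<subseteq> F. finite S \<and> card S = k \<and> fst ` (carrier G \<inter> \<Inter>S) = carrier H \<and>
    card (fibre (carrier G \<inter> \<Inter>S)) * card (carrier A) ^ k = card (carrier A) ^ t"
  using \<open>k \<le> t\<close>
proof (induction k)
  case 0
  have "fibre (carrier G) = carrier V"
    by (auto simp: fibre_def)
  then show ?case
    by (intro exI[of _ "{}"]) (auto simp: carrier_G card_carrier_V)
next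
  case (Suc k)
  then obtain S where S: "S \<subseteq> F" "finite S" "card S = k" and onto: "fst ` (carrier G \<inter> \<Inter>S) = carrier H"
    and card_fib: "card (fibre (carrier G \<inter> \<Inter>S)) * card (carrier A) ^ k = card (carrier A) ^ t"
    by auto
  let ?C = "carrier G \<inter> \<Inter>S"
  have sC: "subgroup ?C G"
    using S(1) F_max by (intro G.subgroup_carrier_Int_Inter) (auto simp: maximal_subgroup_def)
  have "card (carrier A) ^ k < card (carrier A) ^ t"
    using card_A_gt_one Suc.prems by (intro power_strict_increasing) simp_all
  then have "fibre ?C \<noteq> {\<one>\<^bsub>V\<^esub>}"
    using card_fib by auto
  moreover have "\<one>\<^bsub>V\<^esub> \<in> fibre ?C"
    using subgroup.one_closed[OF sC] by (simp add: fibre_def one_G)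
  ultimately obtain v where "v \<in> fibre ?C" "v \<noteq> \<one>\<^bsub>V\<^esub>"
    by blast
  then obtain M where M: "M \<in> F" "\<not> ?C \<subseteq> M" and onto': "fst ` (?C \<inter> M) = carrier H"
    and card': "card (fibre ?C) = card (carrier A) * card (fibre (?C \<inter> M))"
    using exists_supplement_cutting_fibre[OF F_max F_int sC onto] by metis
  have Int_eq: "?C \<inter> M = carrier G \<inter> \<Inter>(insert M S)"
    by auto
  have "M \<notin> S"
    using M(2) by auto
  show ?case
  proof (intro exI[of _ "insert M S"] conjI)
    show "insert M S \<subseteq> F" "finite (insert M S)" "card (insert M S) = Suc k"
      using S M(1) \<open>M \<notin> S\<close> by auto
    show "fst ` (carrier G \<inter> \<Inter>(insert M S)) = carrier H"
      using onto' Int_eq by simp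
    show "card (fibre (carrier G \<inter> \<Inter>(insert M S))) * card (carrier A) ^ Suc k = card (carrier A) ^ t"
      using card' card_fib Int_eq by (simp add: algebra_simps)
  qed
qed

lemma exists_complement_subfamily:
  assumes F_max: "F \<subseteq> {M. maximal_subgroup M G}" and F_int: "carrier G \<inter> \<Inter>F = {\<one>\<^bsub>G\<^esub>}"
  obtains S \<gamma> where "S \<subseteq> F" and "finite S" and "card S = t" and "\<gamma> \<in> derivations H V diag_act"
    and "\<And>h M. h \<in> carrier H \<Longrightarrow> M \<in> S \<Longrightarrow> (h, \<gamma> h) \<in> M"
proof -
  obtain S where S: "S \<subseteq> F" "finite S" "card S = t" and onto: "fst ` (carrier G \<inter> \<Inter>S) = carrier H"
    and card_fib: "card (fibre (carrier G \<inter> \<Inter>S)) * card (carrier A) ^ t = card (carrier A) ^ t"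
    using exists_projecting_subfamily[OF F_max F_int order_refl] by blast
  let ?C = "carrier G \<inter> \<Inter>S"
  have sC: "subgroup ?C G"
    using S(1) F_max by (intro G.subgroup_carrier_Int_Inter) (auto simp: maximal_subgroup_def)
  have "card (fibre ?C) = 1"
    using card_fib card_A_gt_one by simp
  moreover have "\<one>\<^bsub>V\<^esub> \<in> fibre ?C"
    using subgroup.one_closed[OF sC] by (simp add: fibre_def one_G)
  ultimately have "fibre ?C = {\<one>\<^bsub>V\<^esub>}"
    by (metis card_1_singletonE singletonD)
  then obtain \<gamma> where "\<gamma> \<in> derivations H V diag_act" and "\<And>h. h \<in> carrier H \<Longrightarrow> (h, \<gamma> h) \<in> ?C"
    using complement_derivation[OF sC onto] by blast
  with S show thesis
    using that by blast
qed

lemma card_ge_if_Inter_eq_one: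
  assumes F_max: "F \<subseteq> {M. maximal_subgroup M G}" and "finite F"
    and F_int: "carrier G \<inter> \<Inter>F = {\<one>\<^bsub>G\<^esub>}"
  shows "t + sigma H A act \<le> card F"
proof -
  obtain S \<gamma> where S: "S \<subseteq> F" "finite S" "card S = t" and \<gamma>: "\<gamma> \<in> derivations H V diag_act"
    and \<gamma>_S: "\<And>h M. h \<in> carrier H \<Longrightarrow> M \<in> S \<Longrightarrow> (h, \<gamma> h) \<in> M"
    by (rule exists_complement_subfamily[OF F_max F_int]) (rule that)
  define K where "K M = {h \<in> carrier H. (h, \<gamma> h) \<in> M}" for M
  have "K ` (F - S) \<subseteq> Lambda H A act"
    using complement_trace_in_Lambda[OF \<gamma>] F_max by (auto simp: K_def)
  moreover have "carrier H \<inter> \<Inter>(K ` (F - S)) = {\<one>\<^bsub>H\<^esub>}"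
  proof
    show "carrier H \<inter> \<Inter>(K ` (F - S)) \<subseteq> {\<one>\<^bsub>H\<^esub>}"
    proof
      fix h assume h: "h \<in> carrier H \<inter> \<Inter>(K ` (F - S))"
      then have "(h, \<gamma> h) \<in> M" if "M \<in> F" for M
        using that \<gamma>_S by (cases "M \<in> S") (auto simp: K_def)
      moreover have "(h, \<gamma> h) \<in> carrier G"
        using h V.der_closed[OF \<gamma>] by simp
      ultimately have "(h, \<gamma> h) = \<one>\<^bsub>G\<^esub>"
        using F_int by blast
      then show "h \<in> {\<one>\<^bsub>H\<^esub>}"
        by (simp add: one_G)
    qed
    have "(\<one>\<^bsub>H\<^esub>, \<gamma> \<one>\<^bsub>H\<^esub>) \<in> M" if "M \<in> F" for M
      using that F_max subgroup.one_closed[of M G] V.der_one[OF \<gamma>] by (auto simp: one_G maximal_subgroup_def)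
    then show "{\<one>\<^bsub>H\<^esub>} \<subseteq> carrier H \<inter> \<Inter>(K ` (F - S))"
      by (auto simp: K_def)
  qed
  ultimately have "sigma H A act \<le> card (K ` (F - S))"
    using \<open>finite F\<close> by (intro sigma_le_card) simp_all
  also have "\<dots> \<le> card (F - S)"
    using \<open>finite F\<close> by (intro card_image_le) simp
  also have "\<dots> = card F - t"
    using S by (simp add: card_Diff_subset)
  finally show ?thesis
    using card_mono[OF \<open>finite F\<close> S(1)] S(3) by simp
qed

lemma sigma_le_alpha: "t + sigma H A act \<le> alpha G"
proof -
  let ?P = "\<lambda>n. \<exists>F. F \<subseteq> {M. maximal_subgroup M G} \<and> finite F \<and> card F = n \<and>
    carrier G \<inter> \<Inter>F = frattini G"
  obtain F0 where "F0 \<subseteq> {M. maximal_subgroup M G}" "finite F0" "card F0 \<le> t + sigma H A act"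
    "carrier G \<inter> \<Inter>F0 = {\<one>\<^bsub>G\<^esub>}"
    by (rule exists_maximal_family_Inter_eq_one)
  then have "?P (card F0)"
    by (auto simp: frattini_semidirect_power)
  then have "?P (alpha G)"
    unfolding alpha_def by (rule LeastI)
  then obtain F where "F \<subseteq> {M. maximal_subgroup M G}" "finite F" "card F = alpha G"
    "carrier G \<inter> \<Inter>F = {\<one>\<^bsub>G\<^esub>}"
    by (auto simp: frattini_semidirect_power)
  then show ?thesis
    using card_ge_if_Inter_eq_one by metis
qed

theorem alpha_semidirect_power:
  "alpha G = t + sigma H A act \<and> t \<le> alpha G \<and> alpha G \<le> t + dim_End H A act"
  using alpha_le_sigma sigma_le_alpha sigma_le_dim_End[OF finite_A faithful] by simp

end

theorem lemma5p3:
  fixes H :: "'h monoid" and A :: "'a monoid" and act :: "'a \<Rightarrow> 'h \<Rightarrow> 'a" and t :: nat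
  assumes "group H" and "finite (carrier H)"
    and "comm_group A" and "finite (carrier A)"
    and "right_module H A act"
    and "faithful_module H A act"
    and "irreducible_module H A act"
    and "t > 0"
  shows "alpha (semidirect_power H A act t) = t + sigma H A act
         \<and> t \<le> alpha (semidirect_power H A act t)
         \<and> alpha (semidirect_power H A act t) \<le> t + dim_End H A act"
proof -
  interpret faithful_irreducible_power H A act t
    using assms
    by (simp add: faithful_irreducible_power_def faithful_irreducible_power_axioms_def
        irreducible_power_def irreducible_power_axioms_def module_power_def H_module_def
        H_module_axioms_def)
  show ?thesis
    by (rule alpha_semidirect_power)
qed

end
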